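(* Let $G$ be a non-complete connected graph and $v\in V(G)$ a universal vertex. Let $\widetilde G_v$ be the graph obtained from $G$ by adding a new vertex $v'$ whose neighbourhood is exactly $N_G(v)$ (a false twin of $v$). Then $\chi(\mathcal{R}(\widetilde G_v))=\chi(\mathcal{R}(G))$.
   Context: For a connected graph $G$, a search tree on $G$ is a rooted tree with vertex set $V(G)$ defined recursively: its root is some vertex $r\in V(G)$, and the children of $r$ are the roots of search trees on the connected components of $G-r$. For a rooted tree $T$ and $w\in V(T)$, $T|w$ denotes the subtree rooted at $w$. Let $T$ be a search tree on $G$, let $v$ be a child of $u$ in $T$, and let $p$ be the parent of $u$ (if it exists). The $uv$-rotation transforms $T$ into the search tree $T'$ in which: $u$ is a child of $v$ and $v$ is a child of $p$ (or $v$ is the root if $u$ was the root); every subtree of $u$ in $T$ other than $T|v$ is a subtree of $u$ in $T'$; and every subtree $S$ of $v$ in $T$ is a subtree of $u$ in $T'$ if $u$ is adjacent in $G$ to some vertex of $S$, and a subtree of $v$ in $T'$ otherwise. The rotation graph $\mathcal{R}(G)$ is the graph whose vertices are the search trees on $G$, two being adjacent iff they differ by one rotation. $\chi$ denotes chromatic number. A vertex is universal if it is adjacent to all other vertices. *)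

theory Defs
  imports Main
begin

definition graph :: "'a set \<Rightarrow> ('a \<Rightarrow> 'a \<Rightarrow> bool) \<Rightarrow> bool" where
  "graph V E \<longleftrightarrow> finite V \<and> (\<forall>x y. E x y \<longrightarrow> x \<in> V \<and> y \<in> V \<and> x \<noteq> y \<and> E y x)"

definition reach_in :: "('a \<Rightarrow> 'a \<Rightarrow> bool) \<Rightarrow> 'a set \<Rightarrow> 'a \<Rightarrow> 'a \<Rightarrow> bool" where
  "reach_in E S x y \<longleftrightarrow> (x, y) \<in> (Restr {(a, b). E a b} S)\<^sup>*"

definition conn :: "('a \<Rightarrow> 'a \<Rightarrow> bool) \<Rightarrow> 'a set \<Rightarrow> bool" where
  "conn E S \<longleftrightarrow> S \<noteq> {} \<and> (\<forall>x\<in>S. \<forall>y\<in>S. reach_in E S x y)"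

definition comps :: "('a \<Rightarrow> 'a \<Rightarrow> bool) \<Rightarrow> 'a set \<Rightarrow> 'a set set" where
  "comps E S = (\<lambda>x. {y \<in> S. reach_in E S x y}) ` S"

text \<open>Rooted trees are represented by a parent function: par x = Some y iff y is the
  parent of x; roots and non-vertices have par x = None.
  desc par w is the vertex set of the subtree T|w.\<close>
definition desc :: "('a \<Rightarrow> 'a option) \<Rightarrow> 'a \<Rightarrow> 'a set" where
  "desc par w = {x. (x, w) \<in> {(a, b). par a = Some b}\<^sup>*}"

text \<open>st E par S r: the subtree of par rooted at r has vertex set S and is a search tree
  on the (connected) induced subgraph G[S], following the recursive definition.\<close>
inductive st :: "('a \<Rightarrow> 'a \<Rightarrow> bool) \<Rightarrow> ('a \<Rightarrow> 'a option) \<Rightarrow> 'a set \<Rightarrow> 'a \<Rightarrow> bool"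
  for E par where
  "\<lbrakk> r \<in> S; conn E S; desc par r = S;
     bij_betw (desc par) {c. par c = Some r} (comps E (S - {r}));
     \<forall>c. par c = Some r \<longrightarrow> st E par (desc par c) c \<rbrakk> \<Longrightarrow> st E par S r"

definition search_tree :: "'a set \<Rightarrow> ('a \<Rightarrow> 'a \<Rightarrow> bool) \<Rightarrow> ('a \<Rightarrow> 'a option) \<Rightarrow> bool" where
  "search_tree V E par \<longleftrightarrow>
     (\<exists>r. par r = None \<and> st E par V r) \<and> (\<forall>x. x \<notin> V \<longrightarrow> par x = None)"

text \<open>The uv-rotation (v a child of u): v takes u's place under p (or becomes the root),
  u becomes a child of v, and each subtree of v whose vertex set contains a neighbour of u
  is moved below u; everything else is unchanged.\<close>
definition rotate :: "('a \<Rightarrow> 'a \<Rightarrow> bool) \<Rightarrow> ('a \<Rightarrow> 'a option) \<Rightarrow> 'a \<Rightarrow> 'a \<Rightarrow> ('a \<Rightarrow> 'a option)" where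
  "rotate E par u v = (\<lambda>x.
     if x = v then par u
     else if x = u then Some v
     else if par x = Some v \<and> (\<exists>y\<in>desc par x. E u y) then Some u
     else par x)"

definition rot_adj :: "('a \<Rightarrow> 'a \<Rightarrow> bool) \<Rightarrow> ('a \<Rightarrow> 'a option) \<Rightarrow> ('a \<Rightarrow> 'a option) \<Rightarrow> bool" where
  "rot_adj E T T' \<longleftrightarrow> T \<noteq> T' \<and>
     ((\<exists>u v. T v = Some u \<and> T' = rotate E T u v) \<or> (\<exists>u v. T' v = Some u \<and> T = rotate E T' u v))"

definition rot_vertices :: "'a set \<Rightarrow> ('a \<Rightarrow> 'a \<Rightarrow> bool) \<Rightarrow> ('a \<Rightarrow> 'a option) set" where
  "rot_vertices V E = {T. search_tree V E T}"

definition chromatic_number :: "'b set \<Rightarrow> ('b \<Rightarrow> 'b \<Rightarrow> bool) \<Rightarrow> nat" where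
  "chromatic_number W A = (LEAST k. \<exists>f :: 'b \<Rightarrow> nat.
      (\<forall>x\<in>W. f x < k) \<and> (\<forall>x\<in>W. \<forall>y\<in>W. A x y \<longrightarrow> f x \<noteq> f y))"

definition chi_rot :: "'a set \<Rightarrow> ('a \<Rightarrow> 'a \<Rightarrow> bool) \<Rightarrow> nat" where
  "chi_rot V E = chromatic_number (rot_vertices V E) (rot_adj E)"

definition add_false_twin :: "('a \<Rightarrow> 'a \<Rightarrow> bool) \<Rightarrow> 'a \<Rightarrow> 'a \<Rightarrow> 'a \<Rightarrow> 'a \<Rightarrow> bool" where
  "add_false_twin E v v' x y \<longleftrightarrow>
     E x y \<or> (x = v' \<and> E v y) \<or> (y = v' \<and> E v x)"

end

theory Submission
  imports Defs
begin

text \<open>Let G' be G with the false twin v' of v added. Every search tree T of G' projects to a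
  search tree of G: after exchanging v and v' if necessary, v' is either the upper one of two
  comparable twins or a leaf next to the leaf v, and contracting v' yields the projection.
  A rotation of T either projects to a rotation of G, or it leaves the projection unchanged and
  changes an offset in {0, 1, 2}, namely the parity of the subtree of the upper twin, or 2 when
  the twins are incomparable. Hence a proper colouring c of R(G) with k \<ge> 3 colours induces
  the proper colouring T \<mapsto> c(projection of T) + offset(T) mod k of R(G'). Conversely,
  putting v' on top of the search trees of G embeds R(G) into R(G'). Finally, R(G) needs at
  least three colours: for non-adjacent a, b the five search trees of the path a - v - b,
  extended by stacking the remaining vertices above them, form a five-cycle in R(G).\<close>

section \<open>Parent functions\<close>

definition parent_rel :: "('a \<Rightarrow> 'a option) \<Rightarrow> ('a \<times> 'a) set" where
  "parent_rel T = {(a, b). T a = Some b}"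

lemma parent_rel_iff [simp]: "(a, b) \<in> parent_rel T \<longleftrightarrow> T a = Some b"
  by (simp add: parent_rel_def)

lemma single_valued_parent_rel: "single_valued (parent_rel T)"
  by (auto simp: single_valued_def)

lemma desc_parent_rel: "desc T w = {x. (x, w) \<in> (parent_rel T)\<^sup>*}"
  by (simp add: desc_def parent_rel_def)

lemma desc_self [simp]: "w \<in> desc T w"
  by (simp add: desc_parent_rel)

lemma desc_trans: "b \<in> desc T a \<Longrightarrow> x \<in> desc T b \<Longrightarrow> x \<in> desc T a"
  unfolding desc_parent_rel by (auto intro: rtrancl_trans)

lemma desc_mono: "b \<in> desc T a \<Longrightarrow> desc T b \<subseteq> desc T a"
  using desc_trans[of b T a] by (simp add: subset_iff)

lemma child_in_desc: "T c = Some z \<Longrightarrow> c \<in> desc T z"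
  by (auto simp: desc_parent_rel)

lemma desc_unfold: "desc T z = insert z (\<Union>{desc T c | c. T c = Some z})"
proof (intro set_eqI iffI)
  fix x assume "x \<in> desc T z"
  then have "(x, z) \<in> (parent_rel T)\<^sup>*" by (simp add: desc_parent_rel)
  then show "x \<in> insert z (\<Union>{desc T c | c. T c = Some z})"
    by (cases rule: rtranclE) (auto simp: desc_parent_rel)
qed (auto intro: desc_trans child_in_desc)

lemma desc_single_child:
  assumes "T c = Some z" and "\<forall>c'. T c' = Some z \<longrightarrow> c' = c"
  shows "desc T z = insert z (desc T c)"
proof -
  have "{desc T c' | c'. T c' = Some z} = {desc T c}" using assms by blast
  then show ?thesis by (subst desc_unfold) simp
qed

lemma desc_childE:
  assumes "z \<in> desc T r" "z \<noteq> r"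
  obtains c where "T c = Some r" "z \<in> desc T c"
proof -
  have "z \<in> insert r (\<Union>{desc T c | c. T c = Some r})"
    using assms(1) by (simp only: desc_unfold[symmetric])
  then show ?thesis using assms(2) that by blast
qed

lemma desc_leaf: "\<forall>c. T c \<noteq> Some z \<Longrightarrow> desc T z = {z}"
  by (subst desc_unfold) auto

lemma desc_comparable:
  assumes "x \<in> desc T a" "x \<in> desc T b" shows "a \<in> desc T b \<or> b \<in> desc T a"
proof -
  have "(x, a) \<in> (parent_rel T)\<^sup>*" "(x, b) \<in> (parent_rel T)\<^sup>*"
    using assms by (simp_all add: desc_parent_rel)
  from single_valued_confluent[OF single_valued_parent_rel this] show ?thesis
    by (simp add: desc_parent_rel)
qed

lemma root_in_desc_eq: "T r = None \<Longrightarrow> r \<in> desc T y \<Longrightarrow> y = r"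
  by (auto simp: desc_parent_rel elim: converse_rtranclE)

lemma parent_in_desc: "x \<in> desc T z \<Longrightarrow> x \<noteq> z \<Longrightarrow> T x = Some p \<Longrightarrow> p \<in> desc T z"
  by (auto simp: desc_parent_rel elim: converse_rtranclE)

lemma on_parent_cycle:
  assumes "(a, a) \<in> (parent_rel T)\<^sup>+" and "(a, b) \<in> (parent_rel T)\<^sup>*"
  shows "(b, a) \<in> (parent_rel T)\<^sup>+"
  using assms(2)
proof (induction rule: rtrancl_induct)
  case base
  then show ?case using assms(1) .
next
  case (step b c)
  then obtain b' where "T b = Some b'" "(b', a) \<in> (parent_rel T)\<^sup>*"
    by (auto dest: tranclD)
  with step.hyps(2) have "(c, a) \<in> (parent_rel T)\<^sup>*" by simp
  then show ?case using assms(1) by (cases "c = a") (auto dest: rtranclD)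
qed

lemma acyclic_parent_rel:
  assumes "T r = None" and "\<And>a. T a \<noteq> None \<Longrightarrow> a \<in> desc T r"
  shows "acyclic (parent_rel T)"
  unfolding acyclic_def
proof (intro allI notI)
  fix a assume cyc: "(a, a) \<in> (parent_rel T)\<^sup>+"
  then have "T a \<noteq> None" by (auto dest: tranclD)
  then have "(a, r) \<in> (parent_rel T)\<^sup>*" using assms(2) by (simp add: desc_parent_rel)
  then have "(r, a) \<in> (parent_rel T)\<^sup>+" by (rule on_parent_cycle[OF cyc])
  then show False using assms(1) by (auto dest: tranclD)
qed

context
  fixes T :: "'a \<Rightarrow> 'a option"
  assumes acyc: "acyclic (parent_rel T)"
begin

lemma parent_not_desc: "T c = Some z \<Longrightarrow> z \<notin> desc T c"
  using acyc by (auto simp: desc_parent_rel acyclic_def dest: rtrancl_into_trancl1)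

lemma parent_neq_self: "T a \<noteq> Some a"
  using parent_not_desc desc_self by metis

lemma no_parent_cycle2: "T a = Some b \<Longrightarrow> T b \<noteq> Some a"
  using parent_not_desc child_in_desc by metis

lemma no_parent_cycle3: "T a = Some b \<Longrightarrow> T b = Some c \<Longrightarrow> T c \<noteq> Some a"
  using parent_not_desc child_in_desc desc_trans by metis

lemma desc_antisym:
  assumes "a \<in> desc T b" "b \<in> desc T a" shows "a = b"
proof (rule ccontr)
  assume "a \<noteq> b"
  moreover have "(a, b) \<in> (parent_rel T)\<^sup>*" "(b, a) \<in> (parent_rel T)\<^sup>*"
    using assms by (simp_all add: desc_parent_rel)
  ultimately have "(a, a) \<in> (parent_rel T)\<^sup>+"
    by (metis rtranclD trancl_rtrancl_trancl)
  then show False using acyc by (simp add: acyclic_def)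
qed

lemma siblings_desc_disjoint:
  assumes "T c1 = Some z" "T c2 = Some z" "c1 \<noteq> c2"
  shows "desc T c1 \<inter> desc T c2 = {}"
proof (rule ccontr)
  have not_below: "c \<notin> desc T c'" if "T c = Some z" "T c' = Some z" "c \<noteq> c'" for c c'
    using parent_in_desc[of c T c' z] that parent_not_desc[OF that(2)] by blast
  assume "desc T c1 \<inter> desc T c2 \<noteq> {}"
  then obtain x where "x \<in> desc T c1" "x \<in> desc T c2" by blast
  then have "c1 \<in> desc T c2 \<or> c2 \<in> desc T c1" by (rule desc_comparable)
  then show False using not_below assms by metis
qed

end

section \<open>Reachability and components\<close>

lemma reach_in_refl [simp]: "reach_in E S x x"
  by (simp add: reach_in_def)

lemma reach_in_step:
  "reach_in E S x y \<Longrightarrow> E y z \<Longrightarrow> y \<in> S \<Longrightarrow> z \<in> S \<Longrightarrow> reach_in E S x z"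
  unfolding reach_in_def by (rule rtrancl_into_rtrancl) auto

lemma reach_in_edge: "E y z \<Longrightarrow> y \<in> S \<Longrightarrow> z \<in> S \<Longrightarrow> reach_in E S y z"
  using reach_in_step[of E S y y z] by simp

lemma reach_in_trans: "reach_in E S x y \<Longrightarrow> reach_in E S y z \<Longrightarrow> reach_in E S x z"
  unfolding reach_in_def by (rule rtrancl_trans)

lemma reach_in_mono: "S \<subseteq> S' \<Longrightarrow> reach_in E S x y \<Longrightarrow> reach_in E S' x y"
  unfolding reach_in_def by (erule rtrancl_mono[THEN subsetD, rotated]) auto

lemma reach_in_sym: "symp E \<Longrightarrow> reach_in E S x y \<Longrightarrow> reach_in E S y x"
proof -
  assume "symp E"
  then have "sym (Restr {(a, b). E a b} S)" by (auto simp: sym_def symp_def)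
  then have "sym ((Restr {(a, b). E a b} S)\<^sup>*)" by (rule sym_rtrancl)
  then show "reach_in E S x y \<Longrightarrow> reach_in E S y x"
    unfolding reach_in_def sym_def by blast
qed

lemma reach_in_closed:
  assumes "reach_in E S x y" "x \<in> C" and "\<And>a b. a \<in> C \<Longrightarrow> a \<in> S \<Longrightarrow> b \<in> S \<Longrightarrow> E a b \<Longrightarrow> b \<in> C"
  shows "y \<in> C"
  using assms(1)[unfolded reach_in_def] by induction (use assms(2,3) in auto)

lemma reach_in_image:
  assumes "\<And>a b. F (f a) (f b) = F a b" and "reach_in F X x y"
  shows "reach_in F (f ` X) (f x) (f y)"
  using assms(2)[unfolded reach_in_def] unfolding reach_in_def
proof induction
  case (step b c)
  then have "(f b, f c) \<in> Restr {(a, b). F a b} (f ` X)" using assms(1) by auto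
  then show ?case by (rule rtrancl_into_rtrancl[OF step.IH])
qed simp

lemma reach_in_cong:
  assumes "\<And>a b. a \<in> X \<Longrightarrow> b \<in> X \<Longrightarrow> E a b = E' a b"
  shows "reach_in E X = reach_in E' X"
proof -
  have "Restr {(a, b). E a b} X = Restr {(a, b). E' a b} X" using assms by auto
  then show ?thesis unfolding reach_in_def by simp
qed

lemma conn_cong:
  assumes "\<And>a b. a \<in> X \<Longrightarrow> b \<in> X \<Longrightarrow> E a b = E' a b"
  shows "conn E X = conn E' X"
proof -
  have "reach_in E X = reach_in E' X" by (rule reach_in_cong[OF assms])
  then show ?thesis by (simp add: conn_def)
qed

lemma conn_reach: "conn E C \<Longrightarrow> x \<in> C \<Longrightarrow> y \<in> C \<Longrightarrow> reach_in E C x y"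
  by (simp add: conn_def)

lemma conn_singleton: "conn E {x}"
  by (simp add: conn_def)

lemma conn_image:
  assumes "\<And>a b. F (f a) (f b) = F a b" and "conn F X"
  shows "conn F (f ` X)"
  unfolding conn_def
proof (intro conjI ballI)
  show "f ` X \<noteq> {}" using assms(2) by (simp add: conn_def)
  fix x y assume "x \<in> f ` X" "y \<in> f ` X"
  then obtain a b where "a \<in> X" "b \<in> X" "x = f a" "y = f b" by blast
  then show "reach_in F (f ` X) x y"
    using reach_in_image[of F f, OF assms(1)] conn_reach[OF assms(2)] by simp
qed

lemma conn_star:
  assumes "symp E" and "\<forall>C\<in>P. conn E C \<and> (\<exists>c\<in>C. E r c)"
  shows "conn E (insert r (\<Union>P))"
proof -
  let ?S = "insert r (\<Union>P)"
  have from_r: "reach_in E ?S r y" if y: "y \<in> ?S" for y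
  proof (cases "y = r")
    case False
    then obtain C c where C: "C \<in> P" "y \<in> C" "c \<in> C" "E r c" "conn E C"
      using y assms(2) by blast
    have "reach_in E ?S c y"
      using reach_in_mono[of C ?S] conn_reach[OF C(5) C(3) C(2)] C(1) by blast
    moreover have "reach_in E ?S r c" using C by (intro reach_in_edge) auto
    ultimately show ?thesis using reach_in_trans by metis
  qed simp
  show ?thesis unfolding conn_def
  proof (intro conjI ballI)
    fix x y assume "x \<in> ?S" "y \<in> ?S"
    then show "reach_in E ?S x y"
      using reach_in_trans[OF reach_in_sym[OF assms(1) from_r] from_r] by blast
  qed simp
qed

lemma conn_universal:
  assumes "symp E" "v \<in> X" "\<forall>x\<in>X - {v}. E v x"
  shows "conn E X"
proof -
  have "conn E (insert v (\<Union>((\<lambda>x. {x}) ` (X - {v}))))"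
    using assms(3) by (intro conn_star[OF assms(1)]) (auto simp: conn_singleton)
  moreover have "insert v (\<Union>((\<lambda>x. {x}) ` (X - {v}))) = X" using assms(2) by auto
  ultimately show ?thesis by simp
qed

lemma comps_edge:
  assumes "symp E" "C1 \<in> comps E X" "C2 \<in> comps E X" "a \<in> C1" "b \<in> C2" "E a b"
  shows "C1 = C2"
proof -
  obtain x1 x2 where x: "C1 = {y \<in> X. reach_in E X x1 y}" "C2 = {y \<in> X. reach_in E X x2 y}"
    using assms(2,3) unfolding comps_def by blast
  have a: "a \<in> X" "reach_in E X x1 a" and b: "b \<in> X" "reach_in E X x2 b"
    using assms(4,5) x by auto
  have "reach_in E X x1 b" using reach_in_step[OF a(2) assms(6) a(1) b(1)] .
  then have "reach_in E X x1 x2" using reach_in_trans reach_in_sym[OF assms(1) b(2)] by metis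
  then have "reach_in E X x1 y \<longleftrightarrow> reach_in E X x2 y" for y
    using reach_in_trans[of E X x1 x2 y] reach_in_trans[of E X x2 x1 y] reach_in_sym[OF assms(1)]
    by blast
  then show ?thesis using x by simp
qed

lemma component_eqI:
  assumes X: "X = \<Union>P" and conn: "\<forall>C\<in>P. conn E C"
    and sep: "\<forall>C1\<in>P. \<forall>C2\<in>P. C1 \<noteq> C2 \<longrightarrow> C1 \<inter> C2 = {} \<and> (\<forall>a\<in>C1. \<forall>b\<in>C2. \<not> E a b)"
    and C: "C \<in> P" "x \<in> C"
  shows "{y \<in> X. reach_in E X x y} = C"
proof
  have CX: "C \<subseteq> X" using X C(1) by blast
  have "reach_in E X x y" if "y \<in> C" for y
    using reach_in_mono[OF CX conn_reach[OF _ C(2) that]] conn C(1) by simp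
  then show "C \<subseteq> {y \<in> X. reach_in E X x y}" using CX by blast
  have closed: "b \<in> C" if ab: "a \<in> C" "a \<in> X" "b \<in> X" "E a b" for a b
  proof -
    obtain C' where "C' \<in> P" "b \<in> C'" using ab(3) X by blast
    then show ?thesis using sep C(1) ab(1,4) by metis
  qed
  show "{y \<in> X. reach_in E X x y} \<subseteq> C"
  proof
    fix y assume "y \<in> {y \<in> X. reach_in E X x y}"
    then show "y \<in> C" using reach_in_closed[of E X x y C] C(2) closed by blast
  qed
qed

lemma comps_eqI:
  assumes X: "X = \<Union>P" and conn: "\<forall>C\<in>P. conn E C"
    and sep: "\<forall>C1\<in>P. \<forall>C2\<in>P. C1 \<noteq> C2 \<longrightarrow> C1 \<inter> C2 = {} \<and> (\<forall>a\<in>C1. \<forall>b\<in>C2. \<not> E a b)"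
  shows "comps E X = P"
proof
  show "comps E X \<subseteq> P"
  proof
    fix C assume "C \<in> comps E X"
    then obtain x where x: "x \<in> X" "C = {y \<in> X. reach_in E X x y}" by (auto simp: comps_def)
    then obtain C' where C': "C' \<in> P" "x \<in> C'" using X by blast
    then show "C \<in> P" using component_eqI[OF assms C'] x(2) by simp
  qed
  show "P \<subseteq> comps E X"
  proof
    fix C assume C: "C \<in> P"
    then obtain x where x: "x \<in> C" using conn unfolding conn_def by blast
    then have "C = {y \<in> X. reach_in E X x y}" using component_eqI[OF assms C] by simp
    moreover have "x \<in> X" using x C X by blast
    ultimately show "C \<in> comps E X" unfolding comps_def by (rule image_eqI)
  qed
qed

section \<open>Elimination trees\<close>

text \<open>The non-recursive characterisation of search trees (see search_tree_iff_elim_tree below),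
  known as elimination trees.\<close>

definition elim_tree :: "'a set \<Rightarrow> ('a \<Rightarrow> 'a \<Rightarrow> bool) \<Rightarrow> ('a \<Rightarrow> 'a option) \<Rightarrow> bool" where
  "elim_tree S E T \<longleftrightarrow> finite S \<and> (\<forall>a. a \<notin> S \<longrightarrow> T a = None) \<and> (\<forall>a b. T a = Some b \<longrightarrow> b \<in> S)
     \<and> (\<exists>r\<in>S. T r = None \<and> desc T r = S) \<and> (\<forall>z\<in>S. conn E (desc T z))
     \<and> (\<forall>a\<in>S. \<forall>b\<in>S. E a b \<longrightarrow> a \<in> desc T b \<or> b \<in> desc T a)"

lemma elim_treeD:
  assumes "elim_tree S E T"
  shows "finite S" "\<And>a. a \<notin> S \<Longrightarrow> T a = None" "\<And>a b. T a = Some b \<Longrightarrow> b \<in> S"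
    "\<exists>r\<in>S. T r = None \<and> desc T r = S" "\<And>z. z \<in> S \<Longrightarrow> conn E (desc T z)"
    "\<And>a b. a \<in> S \<Longrightarrow> b \<in> S \<Longrightarrow> E a b \<Longrightarrow> a \<in> desc T b \<or> b \<in> desc T a"
  using assms unfolding elim_tree_def by blast+

lemma elim_treeI:
  assumes "finite S" "\<And>a. a \<notin> S \<Longrightarrow> T a = None" "\<And>a b. T a = Some b \<Longrightarrow> b \<in> S"
    "r \<in> S" "T r = None" "desc T r = S" "\<And>z. z \<in> S \<Longrightarrow> conn E (desc T z)"
    "\<And>a b. a \<in> S \<Longrightarrow> b \<in> S \<Longrightarrow> E a b \<Longrightarrow> a \<in> desc T b \<or> b \<in> desc T a"
  shows "elim_tree S E T"
  unfolding elim_tree_def using assms by blast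

context
  fixes S :: "'a set" and E :: "'a \<Rightarrow> 'a \<Rightarrow> bool" and T :: "'a \<Rightarrow> 'a option"
  assumes tree: "elim_tree S E T"
begin

lemma elim_tree_parent_in: "T a = Some b \<Longrightarrow> a \<in> S \<and> b \<in> S"
  using elim_treeD(2,3)[OF tree] by fastforce

lemma elim_tree_root: "z \<in> S \<Longrightarrow> T z = None \<Longrightarrow> desc T z = S"
  using elim_treeD(4)[OF tree] root_in_desc_eq[of T z] by metis

lemma elim_tree_desc_subset: "z \<in> S \<Longrightarrow> desc T z \<subseteq> S"
  using elim_treeD(4)[OF tree] desc_mono[of z T] by metis

lemma elim_tree_finite_desc: "z \<in> S \<Longrightarrow> finite (desc T z)"
  using elim_tree_desc_subset elim_treeD(1)[OF tree] finite_subset by metis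

lemma elim_tree_acyclic: "acyclic (parent_rel T)"
proof -
  obtain r where "r \<in> S" "T r = None" "desc T r = S" using elim_treeD(4)[OF tree] by blast
  then show ?thesis using elim_tree_parent_in by (intro acyclic_parent_rel) auto
qed

lemma elim_tree_no_edge_between_siblings:
  assumes "T c1 = Some z" "T c2 = Some z" "c1 \<noteq> c2" "a \<in> desc T c1" "b \<in> desc T c2"
  shows "\<not> E a b"
proof
  assume "E a b"
  moreover have "a \<in> S" "b \<in> S"
    using assms elim_tree_desc_subset elim_tree_parent_in by blast+
  ultimately have "a \<in> desc T b \<or> b \<in> desc T a" using elim_treeD(6)[OF tree] by blast
  then have "a \<in> desc T c2 \<or> b \<in> desc T c1" using assms(4,5) desc_trans by metis
  then show False
    using siblings_desc_disjoint[OF elim_tree_acyclic assms(1-3)] assms(4,5) by blast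
qed

lemma elim_tree_comps_children:
  assumes "z \<in> S"
  shows "comps E (desc T z - {z}) = desc T ` {c. T c = Some z}"
proof (rule comps_eqI)
  have "z \<notin> desc T c" if "T c = Some z" for c
    using parent_not_desc[OF elim_tree_acyclic that] .
  then show "desc T z - {z} = \<Union>(desc T ` {c. T c = Some z})"
    using desc_unfold[of T z] by blast
  show "\<forall>C\<in>desc T ` {c. T c = Some z}. conn E C"
    using elim_treeD(5)[OF tree] elim_tree_parent_in by blast
  show "\<forall>C1\<in>desc T ` {c. T c = Some z}. \<forall>C2\<in>desc T ` {c. T c = Some z}. C1 \<noteq> C2 \<longrightarrow>
      C1 \<inter> C2 = {} \<and> (\<forall>a\<in>C1. \<forall>b\<in>C2. \<not> E a b)"
  proof (intro ballI impI)
    fix C1 C2 assume "C1 \<in> desc T ` {c. T c = Some z}" "C2 \<in> desc T ` {c. T c = Some z}" "C1 \<noteq> C2"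
    then obtain c1 c2 where
      "T c1 = Some z" "T c2 = Some z" "c1 \<noteq> c2" "C1 = desc T c1" "C2 = desc T c2"
      by auto
    then show "C1 \<inter> C2 = {} \<and> (\<forall>a\<in>C1. \<forall>b\<in>C2. \<not> E a b)"
      using siblings_desc_disjoint[OF elim_tree_acyclic] elim_tree_no_edge_between_siblings by blast
  qed
qed

lemma elim_tree_st: "z \<in> S \<Longrightarrow> st E T (desc T z) z"
proof (induction z rule: measure_induct_rule[where f = "\<lambda>z. card (desc T z)"])
  case (less z)
  let ?Ch = "{c. T c = Some z}"
  have "st E T (desc T c) c" if c: "T c = Some z" for c
  proof (rule less.IH)
    show "c \<in> S" using elim_tree_parent_in c by blast
    have "desc T c \<subset> desc T z"
      using desc_mono[OF child_in_desc[of T c z, OF c]] parent_not_desc[OF elim_tree_acyclic c]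
      by auto
    then show "card (desc T c) < card (desc T z)"
      using elim_tree_finite_desc[OF less.prems] by (simp add: psubset_card_mono)
  qed
  moreover have "inj_on (desc T) ?Ch"
  proof (rule inj_onI)
    fix c1 c2 assume "c1 \<in> ?Ch" "c2 \<in> ?Ch" "desc T c1 = desc T c2"
    then show "c1 = c2"
      using siblings_desc_disjoint[OF elim_tree_acyclic, of c1 z c2]
      by (metis Int_absorb desc_self empty_iff mem_Collect_eq)
  qed
  then have "bij_betw (desc T) ?Ch (comps E (desc T z - {z}))"
    using elim_tree_comps_children[OF less.prems] by (simp add: bij_betw_def)
  ultimately show ?case
    using elim_treeD(5)[OF tree less.prems] by (intro st.intros) auto
qed

end

lemma st_subtrees_conn: "st E T S r \<Longrightarrow> \<forall>z\<in>S. conn E (desc T z)"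
proof (induction rule: st.induct)
  case (1 r S)
  show ?case
  proof
    fix z assume z: "z \<in> S"
    show "conn E (desc T z)"
    proof (cases "z = r")
      case False
      then obtain c where "T c = Some r" "z \<in> desc T c" using z 1(3) desc_childE by metis
      then show ?thesis using 1(5) by blast
    qed (use 1 in simp)
  qed
qed

lemma st_edges_comparable:
  assumes "symp E"
  shows "st E T S r \<Longrightarrow> \<forall>a\<in>S. \<forall>b\<in>S. E a b \<longrightarrow> a \<in> desc T b \<or> b \<in> desc T a"
proof (induction rule: st.induct)
  case (1 r S)
  show ?case
  proof (intro ballI impI)
    fix a b assume ab: "a \<in> S" "b \<in> S" "E a b"
    show "a \<in> desc T b \<or> b \<in> desc T a"
    proof (cases "a = r \<or> b = r")
      case False
      then obtain c1 c2 where c: "T c1 = Some r" "a \<in> desc T c1" "T c2 = Some r" "b \<in> desc T c2"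
        using ab 1(3) desc_childE by metis
      have "desc T c1 \<in> comps E (S - {r})" "desc T c2 \<in> comps E (S - {r})"
        using c(1,3) 1(4) by (auto simp: bij_betw_def)
      then have "desc T c1 = desc T c2" using comps_edge[OF assms] c(2,4) ab(3) by blast
      then have "c1 = c2" using c(1,3) 1(4) by (auto simp: bij_betw_def inj_on_def)
      then show ?thesis using 1(5) c ab by blast
    qed (use 1(3) ab in auto)
  qed
qed

lemma st_parent_in: "st E T S r \<Longrightarrow> \<forall>a\<in>S. \<forall>b. T a = Some b \<longrightarrow> b \<in> S \<or> a = r"
proof (induction rule: st.induct)
  case (1 r S)
  show ?case
  proof (intro ballI allI impI)
    fix a b assume a: "a \<in> S" "T a = Some b"
    show "b \<in> S \<or> a = r"
    proof (cases "a = r")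
      case False
      then obtain c where c: "T c = Some r" "a \<in> desc T c" using a 1(3) desc_childE by metis
      then have "b \<in> desc T c \<or> a = c" using 1(5) a(2) by simp
      moreover have "desc T c \<subseteq> S" using desc_mono[OF child_in_desc[of T c r, OF c(1)]] 1(3) by simp
      ultimately show ?thesis using c(1) a(2) 1(1) by auto
    qed simp
  qed
qed

lemma search_tree_iff_elim_tree:
  assumes "finite S" "symp E"
  shows "search_tree S E T \<longleftrightarrow> elim_tree S E T"
proof
  assume "search_tree S E T"
  then obtain r where r: "T r = None" "st E T S r" and out: "\<forall>a. a \<notin> S \<longrightarrow> T a = None"
    by (auto simp: search_tree_def)
  have root: "r \<in> S" "desc T r = S" using r(2) by (auto elim: st.cases)
  show "elim_tree S E T"
  proof (rule elim_treeI[OF assms(1) _ _ root(1) r(1) root(2)])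
    show "T a = None" if "a \<notin> S" for a using out that by blast
    show "b \<in> S" if ab: "T a = Some b" for a b
    proof -
      have "a \<in> S" using out ab by force
      then have "b \<in> S \<or> a = r" using st_parent_in[OF r(2)] ab by blast
      then show ?thesis using r(1) ab by auto
    qed
    show "conn E (desc T z)" if "z \<in> S" for z using st_subtrees_conn[OF r(2)] that by blast
    show "a \<in> desc T b \<or> b \<in> desc T a" if "a \<in> S" "b \<in> S" "E a b" for a b
      using st_edges_comparable[OF assms(2) r(2)] that by blast
  qed
next
  assume tree: "elim_tree S E T"
  then obtain r where "r \<in> S" "T r = None" "desc T r = S" using elim_treeD(4) by blast
  then show "search_tree S E T"
    using elim_tree_st[OF tree] elim_treeD(2)[OF tree] unfolding search_tree_def by metis
qed

lemma elim_tree_cong_imp: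
  assumes tree: "elim_tree S E T" and agree: "\<And>a b. a \<in> S \<Longrightarrow> b \<in> S \<Longrightarrow> E a b = E' a b"
  shows "elim_tree S E' T"
proof -
  obtain r where r: "r \<in> S" "T r = None" "desc T r = S" using elim_treeD(4)[OF tree] by blast
  show ?thesis
  proof (rule elim_treeI[OF elim_treeD(1-3)[OF tree] r])
    show "conn E' (desc T z)" if "z \<in> S" for z
      using elim_treeD(5)[OF tree that] conn_cong[of "desc T z" E E'] agree
        elim_tree_desc_subset[OF tree that] by blast
    show "a \<in> desc T b \<or> b \<in> desc T a" if "a \<in> S" "b \<in> S" "E' a b" for a b
      using elim_treeD(6)[OF tree] that agree by blast
  qed
qed

lemma elim_tree_cong:
  "(\<And>a b. a \<in> S \<Longrightarrow> b \<in> S \<Longrightarrow> E a b = E' a b) \<Longrightarrow> elim_tree S E T \<longleftrightarrow> elim_tree S E' T"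
  using elim_tree_cong_imp by metis

section \<open>Operations on rooted trees\<close>

lemma rotate_apply:
  "rotate F T u w x = (if x = w then T u else if x = u then Some w
     else if T x = Some w \<and> (\<exists>y\<in>desc T x. F u y) then Some u else T x)"
  by (simp add: rotate_def)

lemma rotate_other: "z \<noteq> w \<Longrightarrow> z \<noteq> u \<Longrightarrow> T z \<noteq> Some w \<Longrightarrow> rotate F T u w z = T z"
  by (simp add: rotate_apply)

lemma rot_adj_sym: "rot_adj F A B \<Longrightarrow> rot_adj F B A"
  unfolding rot_adj_def by blast

lemma rotate_cong:
  assumes tree: "elim_tree S G T" and "T w = Some u" and agree: "\<And>y. y \<in> S \<Longrightarrow> F u y = F' u y"
  shows "rotate F T u w = rotate F' T u w"
proof
  fix z
  have "(\<exists>y\<in>desc T z. F u y) \<longleftrightarrow> (\<exists>y\<in>desc T z. F' u y)" if "T z = Some w"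
    using elim_tree_desc_subset[OF tree] elim_tree_parent_in[OF tree that] agree by blast
  then show "rotate F T u w z = rotate F' T u w z" by (auto simp: rotate_apply)
qed

lemma rotate_keeps_paths:
  assumes wu: "T w = Some u" and uw: "u \<noteq> w" and zu: "z \<noteq> u"
    and path: "(x, z) \<in> (parent_rel T)\<^sup>*"
  shows "(x, z) \<in> (parent_rel (rotate F T u w))\<^sup>*"
proof -
  let ?T = "rotate F T u w"
  have Tu: "?T u = Some w" and Tw: "?T w = T u" using uw by (simp_all add: rotate_apply)
  have Tx: "?T x = T x \<or> (T x = Some w \<and> ?T x = Some u)" if "x \<noteq> u" "x \<noteq> w" for x
    using that by (simp add: rotate_apply)
  show ?thesis
    using path
  proof (induction rule: converse_rtrancl_induct)
    case (step x y)
    then have Txy: "T x = Some y" by simp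
    consider "x = u" | "x = w" | "x \<noteq> u" "x \<noteq> w" by blast
    then show ?case
    proof cases
      case 1
      have "(w, y) \<in> parent_rel ?T" using Tw Txy 1 by simp
      then have "(w, z) \<in> (parent_rel ?T)\<^sup>*" using step.IH by (rule converse_rtrancl_into_rtrancl)
      moreover have "(u, w) \<in> parent_rel ?T" using Tu by simp
      ultimately show ?thesis using 1 by (simp add: converse_rtrancl_into_rtrancl)
    next
      case 2
      then have "(u, z) \<in> (parent_rel ?T)\<^sup>*" using step.IH Txy wu by simp
      then have "(u, z) \<in> (parent_rel ?T)\<^sup>+" using zu by (metis rtranclD)
      then obtain m where "?T u = Some m" "(m, z) \<in> (parent_rel ?T)\<^sup>*" by (auto dest: tranclD)
      then show ?thesis using 2 Tu by simp
    next
      case 3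
      then show ?thesis using Tx[OF 3] step.IH Tu Txy
        by (metis converse_rtrancl_into_rtrancl option.inject parent_rel_iff)
    qed
  qed simp
qed

lemma rotate_reflects_paths:
  assumes wu: "T w = Some u" and uw: "u \<noteq> w" and zw: "z \<noteq> w"
    and path: "(x, z) \<in> (parent_rel (rotate F T u w))\<^sup>*"
  shows "(x, z) \<in> (parent_rel T)\<^sup>*"
proof -
  let ?T = "rotate F T u w"
  have Tu: "?T u = Some w" and Tw: "?T w = T u" using uw by (simp_all add: rotate_apply)
  have Tx: "?T x = T x \<or> (T x = Some w \<and> ?T x = Some u)" if "x \<noteq> u" "x \<noteq> w" for x
    using that by (simp add: rotate_apply)
  show ?thesis
    using path
  proof (induction rule: converse_rtrancl_induct)
    case (step x y)
    then have Txy: "?T x = Some y" by simp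
    consider "x = u" | "x = w" | "x \<noteq> u" "x \<noteq> w" by blast
    then show ?case
    proof cases
      case 1
      then have "(w, z) \<in> (parent_rel T)\<^sup>*" using step.IH Txy Tu by simp
      then have "(w, z) \<in> (parent_rel T)\<^sup>+" using zw by (metis rtranclD)
      then obtain m where "T w = Some m" "(m, z) \<in> (parent_rel T)\<^sup>*" by (auto dest: tranclD)
      then show ?thesis using 1 wu by simp
    next
      case 2
      have "(u, y) \<in> parent_rel T" using Tw Txy 2 by simp
      then have "(u, z) \<in> (parent_rel T)\<^sup>*" using step.IH by (rule converse_rtrancl_into_rtrancl)
      then show ?thesis using 2 wu by (simp add: converse_rtrancl_into_rtrancl)
    next
      case 3
      then show ?thesis using Tx[OF 3] step.IH Txy wu
        by (metis converse_rtrancl_into_rtrancl option.inject parent_rel_iff)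
    qed
  qed simp
qed

lemma desc_rotate_other:
  assumes "T w = Some u" "u \<noteq> w" "z \<noteq> u" "z \<noteq> w"
  shows "desc (rotate F T u w) z = desc T z"
  unfolding desc_parent_rel
  using rotate_keeps_paths[where T = T and F = F, OF assms(1-3)]
    rotate_reflects_paths[where T = T and F = F, OF assms(1,2,4)]
  by blast

lemma desc_rotate_lower:
  assumes wu: "T w = Some u" and uw: "u \<noteq> w"
  shows "desc (rotate F T u w) w = desc T u"
proof -
  let ?T = "rotate F T u w"
  have Tu: "?T u = Some w" using uw by (simp add: rotate_apply)
  have Tx: "?T x = T x \<or> (T x = Some w \<and> ?T x = Some u)" if "x \<noteq> u" "x \<noteq> w" for x
    using that by (simp add: rotate_apply)
  have to_new: "(x, w) \<in> (parent_rel ?T)\<^sup>*" if "(x, u) \<in> (parent_rel T)\<^sup>*" for x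
    using that
  proof (induction rule: converse_rtrancl_induct)
    case (step x y)
    consider "x = u" | "x = w" | "x \<noteq> u" "x \<noteq> w" by blast
    then show ?case
    proof cases
      case 3
      then show ?thesis using Tx[OF 3] step Tu
        by (metis converse_rtrancl_into_rtrancl option.inject parent_rel_iff r_into_rtrancl)
    qed (use Tu in auto)
  qed (use Tu in auto)
  have to_old: "(x, u) \<in> (parent_rel T)\<^sup>*" if "(x, w) \<in> (parent_rel ?T)\<^sup>*" for x
    using that
  proof (induction rule: converse_rtrancl_induct)
    case (step x y)
    consider "x = u" | "x = w" | "x \<noteq> u" "x \<noteq> w" by blast
    then show ?case
    proof cases
      case 3
      then show ?thesis using Tx[OF 3] step wu
        by (metis converse_rtrancl_into_rtrancl option.inject parent_rel_iff r_into_rtrancl)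
    qed (use wu in auto)
  qed (use wu in auto)
  show ?thesis unfolding desc_parent_rel using to_new to_old by blast
qed

definition add_root :: "'a set \<Rightarrow> 'a \<Rightarrow> ('a \<Rightarrow> 'a option) \<Rightarrow> ('a \<Rightarrow> 'a option)" where
  "add_root S a T = (\<lambda>z. if z \<in> S \<and> T z = None then Some a else T z)"

lemma add_root_keep: "T z = Some p \<Longrightarrow> add_root S a T z = Some p"
  by (simp add: add_root_def)

lemma desc_add_root:
  assumes "T a = None" "a \<notin> S" "z \<noteq> a"
  shows "desc (add_root S a T) z = desc T z"
proof
  have "parent_rel T \<subseteq> parent_rel (add_root S a T)" by (auto simp: add_root_def)
  then show "desc T z \<subseteq> desc (add_root S a T) z"
    unfolding desc_parent_rel using rtrancl_mono by blast
  show "desc (add_root S a T) z \<subseteq> desc T z"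
  proof
    fix x assume "x \<in> desc (add_root S a T) z"
    then have "(x, z) \<in> (parent_rel (add_root S a T))\<^sup>*" by (simp add: desc_parent_rel)
    then have "(x, z) \<in> (parent_rel T)\<^sup>*"
    proof (induction rule: converse_rtrancl_induct)
      case (step x y)
      show ?case
      proof (cases "add_root S a T x = T x")
        case True
        then show ?thesis using step by (auto intro: converse_rtrancl_into_rtrancl)
      next
        case False
        then have "y = a" using step.hyps(1) by (auto simp: add_root_def split: if_splits)
        then show ?thesis
          using step.hyps(2) assms by (auto simp: add_root_def elim: converse_rtranclE)
      qed
    qed simp
    then show "x \<in> desc T z" by (simp add: desc_parent_rel)
  qed
qed

lemma desc_add_root_new:
  assumes tree: "elim_tree S F T" and aS: "a \<notin> S"
  shows "desc (add_root S a T) a = insert a S"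
proof -
  let ?T = "add_root S a T"
  obtain r where r: "r \<in> S" "T r = None" "desc T r = S" using elim_treeD(4)[OF tree] by blast
  have child_r: "?T c = Some a \<longleftrightarrow> c = r" for c
  proof
    assume c: "?T c = Some a"
    then have "c \<in> S" "T c = None"
      using elim_treeD(3)[OF tree] aS by (auto simp: add_root_def split: if_splits)
    then show "c = r" using root_in_desc_eq[of T c r] elim_tree_root[OF tree] r by simp
  qed (use r in \<open>simp add: add_root_def\<close>)
  have "desc ?T a = insert a (desc ?T r)"
    by (rule desc_single_child) (use child_r in auto)
  also have "desc ?T r = S"
    using desc_add_root[of T a S r, OF elim_treeD(2)[OF tree aS] aS] r aS by auto
  finally show ?thesis .
qed

lemma add_root_elim_tree:
  assumes tree: "elim_tree S F T" and aS: "a \<notin> S" and "symp F" and adj: "\<exists>s\<in>S. F a s"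
  shows "elim_tree (insert a S) F (add_root S a T)"
proof -
  let ?T = "add_root S a T"
  obtain r where r: "r \<in> S" "desc T r = S" using elim_treeD(4)[OF tree] by blast
  have Ta: "T a = None" using elim_treeD(2)[OF tree aS] .
  have T'a: "?T a = None" using Ta aS by (simp add: add_root_def)
  have dz: "desc ?T z = desc T z" if "z \<in> S" for z
    using desc_add_root[of T a S z, OF Ta aS] that aS by auto
  have parent_in: "b \<in> insert a S" if "?T x = Some b" for x b
    using that elim_treeD(3)[OF tree] by (auto simp: add_root_def split: if_splits)
  note da = desc_add_root_new[OF tree aS]
  have "conn F (insert a (\<Union>{S}))"
    using elim_treeD(5)[OF tree r(1)] r(2) adj by (intro conn_star[OF assms(3)]) simp
  then have conn_a: "conn F (desc ?T a)" using da by simp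
  show ?thesis
  proof (rule elim_treeI[OF _ _ parent_in insertI1 T'a da])
    show "finite (insert a S)" using elim_treeD(1)[OF tree] by simp
    show "?T z = None" if "z \<notin> insert a S" for z
      using that elim_treeD(2)[OF tree] by (simp add: add_root_def)
    show "conn F (desc ?T z)" if "z \<in> insert a S" for z
      using that conn_a dz elim_treeD(5)[OF tree] by auto
    show "x \<in> desc ?T y \<or> y \<in> desc ?T x" if xy: "x \<in> insert a S" "y \<in> insert a S" "F x y" for x y
    proof (cases "x = a \<or> y = a")
      case False
      then have "x \<in> S" "y \<in> S" using xy by auto
      then show ?thesis using elim_treeD(6)[OF tree _ _ xy(3)] dz by simp
    qed (use xy da in auto)
  qed
qed

lemma add_root_rotate:
  assumes tree: "elim_tree S F T" and aS: "a \<notin> S" and wu: "T w = Some u"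
  shows "add_root S a (rotate F T u w) = rotate F (add_root S a T) u w"
proof
  fix z
  have uS: "u \<in> S" and wS: "w \<in> S" using elim_tree_parent_in[OF tree wu] by auto
  have same_child: "add_root S a T x = Some w \<longleftrightarrow> T x = Some w" for x
    using wS aS by (auto simp: add_root_def)
  have same_desc: "desc (add_root S a T) z = desc T z" if "T z = Some w"
    using desc_add_root[of T a S z, OF elim_treeD(2)[OF tree aS] aS]
      elim_tree_parent_in[OF tree that] aS
    by auto
  show "add_root S a (rotate F T u w) z = rotate F (add_root S a T) u w z"
    using uS wS same_child[of z] same_desc
    by (cases "z = w"; cases "z = u"; cases "T z = Some w") (auto simp: rotate_apply add_root_def)
qed

primrec add_chain :: "'a list \<Rightarrow> 'a set \<Rightarrow> ('a \<Rightarrow> 'a option) \<Rightarrow> ('a \<Rightarrow> 'a option)" where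
  "add_chain [] S T = T"
| "add_chain (c # cs) S T = add_root (set cs \<union> S) c (add_chain cs S T)"

lemma add_chain_keep: "T z = Some p \<Longrightarrow> add_chain cs S T z = Some p"
  by (induction cs) (auto simp: add_root_keep)

lemma add_chain_cases: "add_chain cs S T z = T z \<or> (\<exists>c\<in>set cs. add_chain cs S T z = Some c)"
  by (induction cs) (auto simp: add_root_def)

lemma add_chain_elim_tree:
  assumes "elim_tree S F T" "symp F" "distinct cs" "set cs \<inter> S = {}" "\<forall>c\<in>set cs. \<exists>s\<in>S. F c s"
  shows "elim_tree (set cs \<union> S) F (add_chain cs S T)"
  using assms(3-5)
proof (induction cs)
  case (Cons c cs)
  then have "elim_tree (set cs \<union> S) F (add_chain cs S T)" "c \<notin> set cs \<union> S" "\<exists>s\<in>set cs \<union> S. F c s"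
    by auto
  from add_root_elim_tree[OF this(1,2) assms(2) this(3)] show ?case by simp
qed (use assms(1) in simp)

lemma add_chain_rotate:
  assumes "elim_tree S F T" "symp F" "distinct cs" "set cs \<inter> S = {}" "\<forall>c\<in>set cs. \<exists>s\<in>S. F c s"
    and "T w = Some u"
  shows "add_chain cs S (rotate F T u w) = rotate F (add_chain cs S T) u w"
  using assms(3-5)
proof (induction cs)
  case (Cons c cs)
  have tree: "elim_tree (set cs \<union> S) F (add_chain cs S T)"
    using add_chain_elim_tree[OF assms(1,2)] Cons.prems by simp
  have "c \<notin> set cs \<union> S" using Cons.prems by auto
  from add_root_rotate[OF tree this add_chain_keep[of T w u cs S, OF assms(6)]] show ?case
    using Cons by simp
qed simp

definition relabel :: "('a \<Rightarrow> 'a) \<Rightarrow> ('a \<Rightarrow> 'a option) \<Rightarrow> ('a \<Rightarrow> 'a option)" where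
  "relabel f T = (\<lambda>z. map_option f (T (f z)))"

context
  fixes f :: "'a \<Rightarrow> 'a"
  assumes involution: "\<And>z. f (f z) = z"
begin

lemma relabel_relabel [simp]: "relabel f (relabel f T) = T"
proof
  fix z show "relabel f (relabel f T) z = T z"
    using involution by (cases "T z") (simp_all add: relabel_def)
qed

lemma rtrancl_parent_rel_relabel:
  assumes "(a, b) \<in> (parent_rel T)\<^sup>*"
  shows "(f a, f b) \<in> (parent_rel (relabel f T))\<^sup>*"
  using assms
proof induction
  case (step y z)
  then have "(f y, f z) \<in> parent_rel (relabel f T)" using involution by (simp add: relabel_def)
  then show ?case by (rule rtrancl_into_rtrancl[OF step.IH])
qed simp

lemma desc_relabel: "desc (relabel f T) z = f ` desc T (f z)"
proof
  show "f ` desc T (f z) \<subseteq> desc (relabel f T) z"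
  proof
    fix x assume "x \<in> f ` desc T (f z)"
    then obtain y where "x = f y" "(y, f z) \<in> (parent_rel T)\<^sup>*" by (auto simp: desc_parent_rel)
    then show "x \<in> desc (relabel f T) z"
      using rtrancl_parent_rel_relabel[of y "f z" T] involution by (simp add: desc_parent_rel)
  qed
  show "desc (relabel f T) z \<subseteq> f ` desc T (f z)"
  proof
    fix x assume "x \<in> desc (relabel f T) z"
    then have "(f x, f z) \<in> (parent_rel T)\<^sup>*"
      using rtrancl_parent_rel_relabel[of x z "relabel f T"] by (simp add: desc_parent_rel)
    then show "x \<in> f ` desc T (f z)"
      using involution by (metis desc_parent_rel image_eqI mem_Collect_eq)
  qed
qed

lemma relabel_rotate:
  assumes invariant: "\<And>a b. F (f a) (f b) = F a b"
  shows "relabel f (rotate F T u w) = rotate F (relabel f T) (f u) (f w)"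
proof
  fix z
  have f_eq: "f a = f b \<longleftrightarrow> a = b" for a b using involution by metis
  have "(\<exists>y\<in>desc (relabel f T) z. F (f u) y) \<longleftrightarrow> (\<exists>y\<in>desc T (f z). F u y)"
    using invariant unfolding desc_relabel by auto
  moreover have "relabel f T z = Some (f w) \<longleftrightarrow> T (f z) = Some w"
    by (cases "T (f z)") (auto simp: relabel_def f_eq)
  ultimately show "relabel f (rotate F T u w) z = rotate F (relabel f T) (f u) (f w) z"
    using involution by (auto simp: relabel_def rotate_apply f_eq)
qed

lemma relabel_elim_tree:
  assumes invariant: "\<And>a b. F (f a) (f b) = F a b" and stable: "\<And>z. z \<in> S \<longleftrightarrow> f z \<in> S"
    and tree: "elim_tree S F T"
  shows "elim_tree S F (relabel f T)"
proof -
  obtain r where r: "r \<in> S" "T r = None" "desc T r = S" using elim_treeD(4)[OF tree] by blast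
  have image: "f ` S = S"
    using stable involution by (metis subsetI subset_antisym image_subset_iff)
  show ?thesis
  proof (rule elim_treeI[of S _ "f r"])
    show "finite S" using elim_treeD(1)[OF tree] .
    show "relabel f T a = None" if "a \<notin> S" for a
      using that elim_treeD(2)[OF tree] stable by (simp add: relabel_def)
    show "b \<in> S" if "relabel f T a = Some b" for a b
      using that elim_treeD(3)[OF tree] stable by (auto simp: relabel_def)
    show "f r \<in> S" "relabel f T (f r) = None"
      using r stable involution by (simp_all add: relabel_def)
    show "desc (relabel f T) (f r) = S" using r image involution by (simp add: desc_relabel)
    show "conn F (desc (relabel f T) z)" if "z \<in> S" for z
      using conn_image[of F f, OF invariant] elim_treeD(5)[OF tree] that stable
      by (simp add: desc_relabel)
    show "a \<in> desc (relabel f T) b \<or> b \<in> desc (relabel f T) a" if "a \<in> S" "b \<in> S" "F a b" for a b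
      using elim_treeD(6)[OF tree, of "f a" "f b"] that stable invariant involution
      by (simp add: desc_relabel) (metis image_eqI)
  qed
qed

end

definition contract :: "'a \<Rightarrow> ('a \<Rightarrow> 'a option) \<Rightarrow> ('a \<Rightarrow> 'a option)" where
  "contract q T = (\<lambda>z. if z = q then None else if T z = Some q then T q else T z)"

lemma contract_reflects_paths:
  assumes nq: "T q \<noteq> Some q" and zq: "z \<noteq> q"
    and path: "(x, z) \<in> (parent_rel (contract q T))\<^sup>*"
  shows "(x, z) \<in> (parent_rel T)\<^sup>* \<and> x \<noteq> q"
proof
  show "x \<noteq> q" using path zq by (cases rule: converse_rtranclE) (auto simp: contract_def)
  show "(x, z) \<in> (parent_rel T)\<^sup>*"
    using path
  proof (induction rule: converse_rtrancl_induct)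
    case (step x y)
    show ?case
    proof (cases "T x = Some q")
      case True
      then have "T q = Some y" using step.hyps(1) nq by (auto simp: contract_def split: if_splits)
      then show ?thesis using True step.IH by (meson parent_rel_iff converse_rtrancl_into_rtrancl)
    next
      case False
      then have "T x = Some y" using step.hyps(1) by (simp add: contract_def split: if_splits)
      then show ?thesis using step.IH by (meson parent_rel_iff converse_rtrancl_into_rtrancl)
    qed
  qed simp
qed

lemma contract_keeps_paths:
  assumes nq: "T q \<noteq> Some q" and zq: "z \<noteq> q"
    and path: "(x, z) \<in> (parent_rel T)\<^sup>*" and xq: "x \<noteq> q"
  shows "(x, z) \<in> (parent_rel (contract q T))\<^sup>*"
proof -
  let ?T = "contract q T"
  have "(x \<noteq> q \<longrightarrow> (x, z) \<in> (parent_rel ?T)\<^sup>*)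
    \<and> (\<forall>y. T x = Some y \<longrightarrow> x = q \<longrightarrow> (y, z) \<in> (parent_rel ?T)\<^sup>*)"
    using path
  proof (induction rule: converse_rtrancl_induct)
    case (step x y)
    then have Txy: "T x = Some y" by simp
    have "(x, z) \<in> (parent_rel ?T)\<^sup>*" if ne: "x \<noteq> q"
    proof (cases "y = q")
      case True
      then have "(q, z) \<in> (parent_rel T)\<^sup>+" using step.hyps(2) zq by (metis rtranclD)
      then obtain m where m: "T q = Some m" by (auto dest: tranclD)
      then have "(m, z) \<in> (parent_rel ?T)\<^sup>*" using step.IH True by blast
      moreover have "?T x = Some m" using ne Txy True m by (simp add: contract_def)
      ultimately show ?thesis by (meson parent_rel_iff converse_rtrancl_into_rtrancl)
    next
      case False
      then have "?T x = Some y" using ne Txy by (simp add: contract_def)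
      then show ?thesis using step.IH False by (meson parent_rel_iff converse_rtrancl_into_rtrancl)
    qed
    moreover have "y \<noteq> q" if "x = q" using nq Txy that by auto
    ultimately show ?case using step.IH Txy by auto
  qed (use zq in simp)
  then show ?thesis using xq by blast
qed

lemma desc_contract:
  assumes "T q \<noteq> Some q" "z \<noteq> q"
  shows "desc (contract q T) z = desc T z - {q}"
  unfolding desc_parent_rel
  using contract_reflects_paths[where T = T, OF assms] contract_keeps_paths[where T = T, OF assms]
  by blast

section \<open>Colourings\<close>

definition colourable :: "'b set \<Rightarrow> ('b \<Rightarrow> 'b \<Rightarrow> bool) \<Rightarrow> nat \<Rightarrow> bool" where
  "colourable W A k \<longleftrightarrow> (\<exists>f :: 'b \<Rightarrow> nat. (\<forall>x\<in>W. f x < k) \<and> (\<forall>x\<in>W. \<forall>y\<in>W. A x y \<longrightarrow> f x \<noteq> f y))"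

lemma chromatic_number_eqI:
  assumes "\<And>k. colourable W A k \<longleftrightarrow> colourable W' A' k"
  shows "chromatic_number W A = chromatic_number W' A'"
  using assms unfolding chromatic_number_def colourable_def by presburger

lemma colourable_hom:
  assumes "colourable W' A' k" and "\<And>x. x \<in> W \<Longrightarrow> h x \<in> W'"
    and "\<And>x y. x \<in> W \<Longrightarrow> y \<in> W \<Longrightarrow> A x y \<Longrightarrow> A' (h x) (h y)"
  shows "colourable W A k"
proof -
  obtain f where "\<forall>x\<in>W'. f x < k" "\<forall>x\<in>W'. \<forall>y\<in>W'. A' x y \<longrightarrow> f x \<noteq> f y"
    using assms(1) by (auto simp: colourable_def)
  then show ?thesis unfolding colourable_def using assms(2,3) by (intro exI[of _ "f \<circ> h"]) auto
qed

lemma mod_add_left_cancel_less: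
  fixes a x y k :: nat
  assumes "x < k" "y < k" "(a + x) mod k = (a + y) mod k"
  shows "x = y"
proof -
  have "x = y" if "x \<le> y" "y < k" "(a + x) mod k = (a + y) mod k" for x y
  proof (rule ccontr)
    assume "x \<noteq> y"
    have "k dvd y - x" using mod_eq_dvd_iff_nat[of "a + x" "a + y" k] that by simp
    then have "k \<le> y - x" using \<open>x \<noteq> y\<close> that(1) by (intro dvd_imp_le) auto
    then show False using that(2) by linarith
  qed
  then show ?thesis using assms by (metis nat_le_linear)
qed

text \<open>The colouring c (h x) + off x (mod k): edges that h collapses are separated by the offset,
  all other edges by c.\<close>

lemma colourable_offset:
  assumes "colourable W A k" and "\<And>x. x \<in> W' \<Longrightarrow> h x \<in> W" and "\<And>x. off x < k"
    and "\<And>x y. x \<in> W' \<Longrightarrow> y \<in> W' \<Longrightarrow> A' x y \<Longrightarrow>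
      (h x = h y \<and> off x \<noteq> off y) \<or> (A (h x) (h y) \<and> off x = off y)"
  shows "colourable W' A' k"
proof -
  obtain c where c: "\<forall>x\<in>W. c x < k" "\<forall>x\<in>W. \<forall>y\<in>W. A x y \<longrightarrow> c x \<noteq> c y"
    using assms(1) by (auto simp: colourable_def)
  let ?g = "\<lambda>x. (c (h x) + off x) mod k"
  have "?g x \<noteq> ?g y" if "x \<in> W'" "y \<in> W'" "A' x y" for x y
  proof
    assume eq: "?g x = ?g y"
    from assms(4)[OF that] show False
    proof
      assume "h x = h y \<and> off x \<noteq> off y"
      then show False using eq mod_add_left_cancel_less[OF assms(3) assms(3)] by simp
    next
      assume a: "A (h x) (h y) \<and> off x = off y"
      then have "c (h x) = c (h y)"
        using eq mod_add_left_cancel_less[of "c (h x)" k "c (h y)" "off x"] c(1) assms(2) that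
        by (simp add: add.commute)
      then show False using c(2) a assms(2) that by blast
    qed
  qed
  moreover have "0 < k" using assms(3) by (metis not_less0 neq0_conv)
  ultimately show ?thesis unfolding colourable_def by (intro exI[of _ ?g]) auto
qed

section \<open>Rotation graphs contain a five-cycle\<close>

lemma five_cycle_not_colourable:
  assumes "k < 3" and "x1 \<in> W" "x2 \<in> W" "x3 \<in> W" "x4 \<in> W" "x5 \<in> W"
    and "A x1 x2" "A x2 x3" "A x3 x4" "A x4 x5" "A x5 x1"
  shows "\<not> colourable W A k"
proof
  assume "colourable W A k"
  then obtain f :: "_ \<Rightarrow> nat" where "\<forall>x\<in>W. f x < k" "\<forall>x\<in>W. \<forall>y\<in>W. A x y \<longrightarrow> f x \<noteq> f y"
    unfolding colourable_def by blast
  then have "f x1 < k" "f x2 < k" "f x3 < k" "f x4 < k" "f x5 < k"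
    "f x1 \<noteq> f x2" "f x2 \<noteq> f x3" "f x3 \<noteq> f x4" "f x4 \<noteq> f x5" "f x5 \<noteq> f x1"
    using assms by blast+
  then show False using assms(1) by linarith
qed

lemma elim_tree_singleton: "elim_tree {z} E (\<lambda>_. None)"
  by (rule elim_treeI[of _ _ z]) (auto simp: desc_leaf conn_singleton)

lemma elim_tree_path3:
  assumes "symp E" "distinct [x, y, z]" "E y z" "E x y \<or> E x z"
  shows "elim_tree {x, y, z} E (\<lambda>t. if t = y then Some x else if t = z then Some y else None)"
proof -
  have "elim_tree {y, z} E (add_root {z} y (\<lambda>_. None))"
    using add_root_elim_tree[OF elim_tree_singleton _ assms(1)] assms(2,3) by simp
  then have "elim_tree {x, y, z} E (add_root {y, z} x (add_root {z} y (\<lambda>_. None)))"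
    using add_root_elim_tree[OF _ _ assms(1)] assms(2,4) by simp
  moreover have "add_root {y, z} x (add_root {z} y (\<lambda>_. None))
      = (\<lambda>t. if t = y then Some x else if t = z then Some y else None)"
    using assms(2) by (auto simp: add_root_def fun_eq_iff)
  ultimately show ?thesis by simp
qed

lemma elim_tree_star3:
  assumes "symp E" "distinct [a, v, b]" "E v a" "E v b" "\<not> E a b"
  shows "elim_tree {a, v, b} E (\<lambda>t. if t = a \<or> t = b then Some v else None)"
    (is "elim_tree ?B E ?T")
proof -
  have leaves: "desc ?T a = {a}" "desc ?T b = {b}" by (rule desc_leaf; use assms(2) in auto)+
  have "{desc ?T c | c. ?T c = Some v} = {{a}, {b}}"
    using leaves assms(2) by auto
  then have dv: "desc ?T v = ?B" by (subst desc_unfold) auto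
  have "conn E (insert v (\<Union>{{a}, {b}}))"
    using assms(3,4) conn_singleton by (intro conn_star[OF assms(1)]) auto
  then have conn_v: "conn E ?B" by (simp add: insert_commute)
  have "\<not> E b a" using assms(1,5) by (auto simp: symp_def)
  then show ?thesis
    using assms(2,5) dv leaves conn_v conn_singleton
    by (intro elim_treeI[where r = v]) (auto split: if_splits)
qed

lemma rot_adj_add_chain:
  assumes "elim_tree S E X" "symp E" "distinct cs" "set cs \<inter> S = {}" "\<forall>c\<in>set cs. \<exists>s\<in>S. E c s"
    and "X w = Some u" and "X z = Some p" "p \<in> S" "rotate E X u w z \<noteq> Some p"
  shows "rot_adj E (add_chain cs S X) (add_chain cs S (rotate E X u w))"
proof -
  have "add_chain cs S X z = Some p" using add_chain_keep assms(7) by metis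
  moreover have "add_chain cs S (rotate E X u w) z \<noteq> Some p"
    using add_chain_cases[of cs S "rotate E X u w" z] assms(4,8,9) by auto
  ultimately show ?thesis
    using add_chain_rotate[OF assms(1-6)] add_chain_keep[of X w u cs S, OF assms(6)]
    unfolding rot_adj_def by metis
qed

lemma path3_rotation_cycle:
  fixes a v b :: 'a
  defines "B1 \<equiv> \<lambda>t. if t = a \<or> t = b then Some v else None"
    and "B2 \<equiv> \<lambda>t. if t = v then Some a else if t = b then Some v else None"
    and "B3 \<equiv> \<lambda>t. if t = b then Some a else if t = v then Some b else None"
    and "B4 \<equiv> \<lambda>t. if t = a then Some b else if t = v then Some a else None"
    and "B5 \<equiv> \<lambda>t. if t = v then Some b else if t = a then Some v else None"
  assumes sym: "symp E" and dist: "distinct [a, v, b]" and E: "E v a" "E v b" "\<not> E a b"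
  shows "elim_tree {a, v, b} E B1" "elim_tree {a, v, b} E B2" "elim_tree {a, v, b} E B3"
    "elim_tree {a, v, b} E B4" "elim_tree {a, v, b} E B5"
    and "rotate E B1 v a = B2" "rotate E B2 v b = B3" "rotate E B3 a b = B4"
    "rotate E B4 a v = B5" "rotate E B5 b v = B1"
proof -
  have E': "E a v" "E b v" "\<not> E b a" using E sym by (auto simp: symp_def)
  have path: "elim_tree {a, v, b} E (\<lambda>t. if t = y then Some x else if t = z then Some y else None)"
    if "{x, y, z} = {a, v, b}" "distinct [x, y, z]" "E y z" "E x y \<or> E x z" for x y z
    using elim_tree_path3[OF sym that(2-4)] that(1) by simp
  show "elim_tree {a, v, b} E B1" "elim_tree {a, v, b} E B2" "elim_tree {a, v, b} E B3"
    "elim_tree {a, v, b} E B4" "elim_tree {a, v, b} E B5"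
    unfolding B1_def B2_def B3_def B4_def B5_def
    by (rule elim_tree_star3[OF sym dist E] path; use dist E E' in auto)+
  have "desc B3 v = {v}" "desc B5 a = {a}"
    unfolding B3_def B5_def by (rule desc_leaf; use dist in auto)+
  then show "rotate E B1 v a = B2" "rotate E B2 v b = B3" "rotate E B3 a b = B4"
    "rotate E B4 a v = B5" "rotate E B5 b v = B1"
    using dist E E' by (auto simp: fun_eq_iff rotate_apply B1_def B2_def B3_def B4_def B5_def)
qed

text \<open>The five search trees of the path a - v - b form a five-cycle in the rotation graph; the
  other vertices are stacked above them as a chain.\<close>

theorem rot_not_colourable:
  assumes graph: "graph V E" and v: "v \<in> V" "\<forall>x\<in>V. x \<noteq> v \<longrightarrow> E v x"
    and ab: "a \<in> V" "b \<in> V" "a \<noteq> b" "\<not> E a b" and "k < 3"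
  shows "\<not> colourable (rot_vertices V E) (rot_adj E) k"
proof -
  have sym: "symp E" and fin: "finite V" using graph by (auto simp: graph_def symp_def)
  have "a \<noteq> v" using v(2) ab(2,3,4) by metis
  moreover have "b \<noteq> v" using v(2) ab(1,3,4) sym by (metis symp_def)
  ultimately have dist: "distinct [a, v, b]" and neq: "a \<noteq> v" "v \<noteq> a" "v \<noteq> b" "b \<noteq> v"
    using ab(3) by auto
  let ?B = "{a, v, b}"
  obtain cs where cs: "distinct cs" "set cs = V - ?B"
    using finite_distinct_list[of "V - ?B"] fin by blast
  have cs_adj: "\<forall>c\<in>set cs. \<exists>s\<in>?B. E c s" using cs v sym by (auto simp: symp_def)
  have V: "set cs \<union> ?B = V" using cs ab v by auto
  define B1 where "B1 = (\<lambda>t. if t = a \<or> t = b then Some v else None)"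
  define B2 where "B2 = (\<lambda>t. if t = v then Some a else if t = b then Some v else None)"
  define B3 where "B3 = (\<lambda>t. if t = b then Some a else if t = v then Some b else None)"
  define B4 where "B4 = (\<lambda>t. if t = a then Some b else if t = v then Some a else None)"
  define B5 where "B5 = (\<lambda>t. if t = v then Some b else if t = a then Some v else None)"
  note cycle = path3_rotation_cycle[OF sym dist v(2)[rule_format, OF ab(1) neq(1)]
      v(2)[rule_format, OF ab(2) neq(4)] ab(4), folded B1_def B2_def B3_def B4_def B5_def]
  let ?T = "add_chain cs ?B"
  have in_R: "?T X \<in> rot_vertices V E" if "elim_tree ?B E X" for X
    using add_chain_elim_tree[OF that sym cs(1) _ cs_adj] cs(2) V
      search_tree_iff_elim_tree[OF fin sym]
    by (simp add: rot_vertices_def Diff_disjoint)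
  have adj: "rot_adj E (?T X) (?T (rotate E X u w))"
    if "elim_tree ?B E X" "X w = Some u" "X z = Some p" "p \<in> ?B" "rotate E X u w z \<noteq> Some p"
    for X u w z p
    using rot_adj_add_chain[OF that(1) sym cs(1) _ cs_adj that(2-5)] cs(2)
    by (simp add: Diff_disjoint)
  have vals: "B1 a = Some v" "B1 v = None" "B2 a = None" "B2 b = Some v" "B3 b = Some a"
    "B4 b = None" "B4 v = Some a" "B5 v = Some b"
    using ab(3) by (simp_all add: neq B1_def B2_def B3_def B4_def B5_def)
  have "rot_adj E (?T B1) (?T B2)" "rot_adj E (?T B2) (?T B3)" "rot_adj E (?T B3) (?T B4)"
    "rot_adj E (?T B4) (?T B5)" "rot_adj E (?T B5) (?T B1)"
    using adj[OF cycle(1), of a v a v] adj[OF cycle(2), of b v b v] adj[OF cycle(3), of b a b a]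
      adj[OF cycle(4), of v a v a] adj[OF cycle(5), of v b v b] ab(3)
    by (simp_all add: cycle(6-10) vals neq)
  with in_R[OF cycle(1)] in_R[OF cycle(2)] in_R[OF cycle(3)] in_R[OF cycle(4)] in_R[OF cycle(5)]
  show ?thesis by (rule five_cycle_not_colourable[where A = "rot_adj E", OF \<open>k < 3\<close>])
qed

section \<open>Adding a false twin of a universal vertex\<close>

locale false_twin =
  fixes V :: "'a set" and E :: "'a \<Rightarrow> 'a \<Rightarrow> bool" and v v' :: 'a
  assumes simple_graph: "graph V E" and non_complete: "\<exists>x\<in>V. \<exists>y\<in>V. x \<noteq> y \<and> \<not> E x y"
    and v_in: "v \<in> V" and universal: "\<forall>x\<in>V. x \<noteq> v \<longrightarrow> E v x" and v'_notin: "v' \<notin> V"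
begin

definition E' :: "'a \<Rightarrow> 'a \<Rightarrow> bool" where "E' = add_false_twin E v v'"

definition V' :: "'a set" where "V' = insert v' V"

definition swap :: "'a \<Rightarrow> 'a" where "swap z = (if z = v then v' else if z = v' then v else z)"

lemma finite_V: "finite V" and finite_V': "finite V'"
  using simple_graph by (simp_all add: graph_def V'_def)

lemma E_graph: "E a b \<Longrightarrow> a \<in> V \<and> b \<in> V \<and> a \<noteq> b \<and> E b a"
  using simple_graph unfolding graph_def by blast

lemma v_neq_v' [simp]: "v \<noteq> v'" and v'_neq_v [simp]: "v' \<noteq> v"
  using v_in v'_notin by auto

lemma v_in_V' [simp]: "v \<in> V'" and v'_in_V' [simp]: "v' \<in> V'"
  using v_in by (auto simp: V'_def)

lemma E_v_iff: "E v b \<longleftrightarrow> b \<in> V \<and> b \<noteq> v"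
  using universal E_graph by blast

lemma E'_eq_E: "a \<in> V \<Longrightarrow> b \<in> V \<Longrightarrow> E' a b = E a b"
  using v'_notin by (auto simp: E'_def add_false_twin_def)

lemma E'_twin_iff:
  "E' v b \<longleftrightarrow> b \<in> V \<and> b \<noteq> v" "E' b v \<longleftrightarrow> b \<in> V \<and> b \<noteq> v"
  "E' v' b \<longleftrightarrow> b \<in> V \<and> b \<noteq> v" "E' b v' \<longleftrightarrow> b \<in> V \<and> b \<noteq> v"
  using v'_notin E_graph by (auto simp: E'_def add_false_twin_def E_v_iff)

lemma E'_in: "E' a b \<Longrightarrow> a \<in> V' \<and> b \<in> V' \<and> a \<noteq> b"
  using E_graph v'_notin by (auto simp: E'_def add_false_twin_def V'_def E_v_iff)

lemma symp_E: "symp E" and symp_E': "symp E'"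
  using E_graph by (auto simp: symp_def E'_def add_false_twin_def)

lemma E'_adj_twins:
  "z \<in> V' \<Longrightarrow> z \<noteq> v \<Longrightarrow> z \<noteq> v' \<Longrightarrow> E' z v \<and> E' v z \<and> E' z v' \<and> E' v' z"
  by (simp add: E'_twin_iff V'_def)

lemma swap_swap [simp]: "swap (swap z) = z"
  by (simp add: swap_def)

lemma swap_simps [simp]: "swap v = v'" "swap v' = v" "z \<noteq> v \<Longrightarrow> z \<noteq> v' \<Longrightarrow> swap z = z"
  by (simp_all add: swap_def)

lemma E'_swap: "E' (swap a) (swap b) = E' a b"
  unfolding swap_def using v'_notin by (auto simp: E'_twin_iff)

lemma swap_in_V': "swap z \<in> V' \<longleftrightarrow> z \<in> V'"
  using v_in by (auto simp: V'_def swap_def)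

lemma search_tree_V_iff: "search_tree V E T \<longleftrightarrow> elim_tree V E' T"
  using search_tree_iff_elim_tree[OF finite_V symp_E] elim_tree_cong[of V E E'] E'_eq_E by metis

lemma search_tree_V'_iff: "search_tree V' E' T \<longleftrightarrow> elim_tree V' E' T"
  using search_tree_iff_elim_tree[OF finite_V' symp_E'] .

lemma exists_other_vertex: "\<exists>a\<in>V. a \<noteq> v"
  using non_complete by metis

definition lift :: "('a \<Rightarrow> 'a option) \<Rightarrow> ('a \<Rightarrow> 'a option)" where
  "lift T = add_root V v' T"

lemma lift_elim_tree: "elim_tree V E' T \<Longrightarrow> elim_tree V' E' (lift T)"
  unfolding lift_def V'_def
  using add_root_elim_tree[OF _ v'_notin symp_E'] exists_other_vertex E'_twin_iff(3) by blast

lemma rotate_E_eq_E': "elim_tree V E' T \<Longrightarrow> T w = Some u \<Longrightarrow> rotate E T u w = rotate E' T u w"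
  using rotate_cong[of V E' T w u E E'] E'_eq_E elim_tree_parent_in by metis

lemma lift_rotate:
  "elim_tree V E' T \<Longrightarrow> T w = Some u \<Longrightarrow> lift (rotate E T u w) = rotate E' (lift T) u w"
  unfolding lift_def using add_root_rotate[OF _ v'_notin] rotate_E_eq_E' by metis

lemma lift_inj: "elim_tree V E' T1 \<Longrightarrow> elim_tree V E' T2 \<Longrightarrow> lift T1 = lift T2 \<Longrightarrow> T1 = T2"
proof
  fix z
  have recover: "T z = (if z \<notin> V \<or> lift T z = Some v' then None else lift T z)"
    if "elim_tree V E' T" for T
    using elim_treeD(2)[OF that, of z] elim_tree_parent_in[OF that, of z v'] v'_notin
    by (auto simp: lift_def add_root_def)
  assume "elim_tree V E' T1" "elim_tree V E' T2" "lift T1 = lift T2"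
  then show "T1 z = T2 z" using recover by metis
qed

lemma colourable_lift:
  assumes "colourable (rot_vertices V' E') (rot_adj E') k"
  shows "colourable (rot_vertices V E) (rot_adj E) k"
proof (rule colourable_hom[OF assms])
  show "lift T \<in> rot_vertices V' E'" if "T \<in> rot_vertices V E" for T
    using that lift_elim_tree by (simp add: rot_vertices_def search_tree_V_iff search_tree_V'_iff)
  show "rot_adj E' (lift T1) (lift T2)"
    if "T1 \<in> rot_vertices V E" "T2 \<in> rot_vertices V E" "rot_adj E T1 T2" for T1 T2
  proof -
    have trees: "elim_tree V E' T1" "elim_tree V E' T2"
      using that(1,2) by (simp_all add: rot_vertices_def search_tree_V_iff)
    have lift_parent: "lift T w = Some u" if "T w = Some u" for T w u
      using that by (simp add: lift_def add_root_keep)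
    show ?thesis
      using that(3) lift_inj[OF trees] lift_rotate trees lift_parent
      unfolding rot_adj_def by metis
  qed
qed

abbreviation twin_tree :: "('a \<Rightarrow> 'a option) \<Rightarrow> bool" where
  "twin_tree T \<equiv> elim_tree V' E' T"

lemma twin_tree_swap: "twin_tree T \<Longrightarrow> twin_tree (relabel swap T)"
  using relabel_elim_tree[of swap E' V' T] E'_swap swap_in_V' by simp

lemma desc_swap: "desc (relabel swap T) z = swap ` desc T (swap z)"
  using desc_relabel[of swap] by simp

lemma twins_not_both_below: "twin_tree T \<Longrightarrow> v \<in> desc T v' \<Longrightarrow> v' \<notin> desc T v"
  using desc_antisym[OF elim_tree_acyclic] by fastforce

lemma twin_tree_child_unique:
  assumes tree: "twin_tree T" and "T z = Some p" "y \<in> desc T z" "y = v \<or> y = v'"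
    and c: "T c = Some p" "c \<noteq> v" "c \<noteq> v'"
  shows "c = z"
proof (rule ccontr)
  assume "c \<noteq> z"
  have "E' c y" using E'_adj_twins elim_tree_parent_in[OF tree c(1)] c(2,3) assms(4) by blast
  then show False
    using elim_tree_no_edge_between_siblings[OF tree c(1) assms(2) \<open>c \<noteq> z\<close> desc_self assms(3)]
    by blast
qed

lemma twin_upper_unique_child:
  assumes tree: "twin_tree T" and below: "v \<in> desc T v'"
  shows "\<exists>z. T z = Some v' \<and> v \<in> desc T z \<and> (\<forall>c. T c = Some v' \<longrightarrow> c = z)
    \<and> desc T v' = insert v' (desc T z)"
proof -
  have ac: "acyclic (parent_rel T)" using elim_tree_acyclic[OF tree] .
  obtain z where z: "T z = Some v'" "v \<in> desc T z" using below desc_childE v_neq_v' by metis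
  have unique: "c = z" if c: "T c = Some v'" for c
  proof (cases "c = v")
    case True
    then show ?thesis using siblings_desc_disjoint[OF ac c z(1)] z(2) desc_self[of c T] by blast
  next
    case False
    moreover have "c \<noteq> v'" using parent_neq_self[OF ac] c by metis
    ultimately show ?thesis using twin_tree_child_unique[OF tree z(1,2) _ c] by simp
  qed
  then show ?thesis using z desc_single_child[of T z v'] by blast
qed

lemma twin_incomparable_no_child:
  assumes tree: "twin_tree T" and twins: "x = v \<and> y = v' \<or> x = v' \<and> y = v"
    and inc: "x \<notin> desc T y" "y \<notin> desc T x"
  shows "T c \<noteq> Some x"
proof
  assume c: "T c = Some x"
  have "c \<noteq> x" using parent_neq_self[OF elim_tree_acyclic[OF tree]] c by metis
  moreover have "c \<noteq> y" using inc(2) child_in_desc[of T c x] c by metis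
  ultimately have "E' c y" using E'_adj_twins elim_tree_parent_in[OF tree c] twins by blast
  then have "c \<in> desc T y \<or> y \<in> desc T c"
    using elim_treeD(6)[OF tree] elim_tree_parent_in[OF tree c] E'_in by blast
  moreover have "c \<in> desc T x" using child_in_desc[of T c x] c .
  ultimately show False using inc desc_comparable desc_trans by metis
qed

lemma twin_incomparable_parent:
  assumes tree: "twin_tree T" and twins: "x = v \<and> y = v' \<or> x = v' \<and> y = v"
    and inc: "x \<notin> desc T y" "y \<notin> desc T x" and p: "T x = Some p"
  shows "y \<in> desc T p"
proof -
  have "p \<noteq> x" using parent_neq_self[OF elim_tree_acyclic[OF tree]] p by metis
  moreover have "p \<noteq> y" using inc(1) child_in_desc[of T x p] p by metis
  ultimately have "E' p y" using E'_adj_twins elim_tree_parent_in[OF tree p] twins by blast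
  then have "p \<in> desc T y \<or> y \<in> desc T p"
    using elim_treeD(6)[OF tree] elim_tree_parent_in[OF tree p] E'_in by blast
  moreover have "desc T y = {y}"
    using twin_incomparable_no_child[OF tree _ inc(2,1)] twins by (intro desc_leaf) blast
  ultimately show ?thesis using \<open>p \<noteq> y\<close> by blast
qed

lemma twins_sibling_leaves:
  assumes tree: "twin_tree T" and inc: "v \<notin> desc T v'" "v' \<notin> desc T v"
  obtains q where "T v = Some q" "T v' = Some q" "q \<in> V" "q \<noteq> v"
    "\<forall>c. T c \<noteq> Some v" "\<forall>c. T c \<noteq> Some v'"
proof -
  have ac: "acyclic (parent_rel T)" using elim_tree_acyclic[OF tree] .
  obtain p q where p: "T v = Some p" and q: "T v' = Some q"
    using elim_tree_root[OF tree] inc by (metis not_None_eq v_in_V' v'_in_V')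
  have "v' \<in> desc T p" "v \<in> desc T q"
    using twin_incomparable_parent[OF tree _ inc(1,2) p]
      twin_incomparable_parent[OF tree _ inc(2,1) q]
    by simp_all
  moreover have "v \<noteq> q" "v' \<noteq> p" using inc child_in_desc p q by metis+
  ultimately have "p \<in> desc T q" "q \<in> desc T p" using parent_in_desc p q by metis+
  then have "p = q" by (rule desc_antisym[OF ac])
  moreover have "q \<in> V" using elim_tree_parent_in[OF tree q] parent_neq_self[OF ac] q
    \<open>v \<noteq> q\<close> by (auto simp: V'_def)
  ultimately show ?thesis
    using that p q \<open>v \<noteq> q\<close> twin_incomparable_no_child[OF tree _ inc]
      twin_incomparable_no_child[OF tree _ inc(2,1)]
    by auto
qed

lemma v_below_ancestor_of_v':
  assumes tree: "twin_tree T" and upper: "v' \<notin> desc T v" and z: "v' \<in> desc T z" "z \<noteq> v'"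
  shows "v \<in> desc T z"
proof (cases "v \<in> desc T v'")
  case True
  then show ?thesis using desc_trans z(1) by metis
next
  case False
  then obtain q where q: "T v = Some q" "T v' = Some q"
    using twins_sibling_leaves[OF tree _ upper] by metis
  then have "q \<in> desc T z" using parent_in_desc[of v' T z q] z q(2) by auto
  then show ?thesis using desc_trans child_in_desc[of T v q] q(1) by metis
qed

lemma contract_root:
  assumes tree: "twin_tree T" and upper: "v' \<notin> desc T v"
  obtains r where "r \<in> V" "contract v' T r = None" "desc T r - {v'} = V"
proof -
  have ac: "acyclic (parent_rel T)" using elim_tree_acyclic[OF tree] .
  obtain r where r: "r \<in> V'" "T r = None" "desc T r = V'" using elim_treeD(4)[OF tree] by blast
  show ?thesis
  proof (cases "r = v'")
    case False
    show ?thesis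
    proof (rule that[of r])
      show "r \<in> V" using r(1) False by (simp add: V'_def)
      show "contract v' T r = None" using r(2) by (simp add: contract_def)
      show "desc T r - {v'} = V" using r(3) v'_notin by (simp add: V'_def)
    qed
  next
    case True
    then have "v \<in> desc T v'" using r(3) by simp
    then obtain z where z: "T z = Some v'" "desc T v' = insert v' (desc T z)"
      using twin_upper_unique_child[OF tree] by blast
    have "v' \<notin> desc T z" using parent_not_desc[OF ac z(1)] .
    then have "desc T z = V" using z(2) r(3) True v'_notin by (auto simp: V'_def)
    moreover have "z \<noteq> v'" using parent_neq_self[OF ac] z(1) by metis
    moreover have "z \<in> V" using \<open>desc T z = V\<close> desc_self by metis
    ultimately show ?thesis
      using that[of z] z(1) r(2) True \<open>v' \<notin> desc T z\<close> by (simp add: contract_def)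
  qed
qed

lemma contract_elim_tree:
  assumes tree: "twin_tree T" and upper: "v' \<notin> desc T v"
  shows "elim_tree V E' (contract v' T)"
proof -
  let ?T = "contract v' T"
  have no_loop: "T v' \<noteq> Some v'" using parent_neq_self[OF elim_tree_acyclic[OF tree]] .
  have dz: "desc ?T z = desc T z - {v'}" if "z \<noteq> v'" for z
    using desc_contract[of T v' z, OF no_loop that] .
  obtain r where r: "r \<in> V" "?T r = None" "desc T r - {v'} = V" using contract_root[OF tree upper] .
  have "r \<noteq> v'" using r(1) v'_notin by blast
  show ?thesis
  proof (rule elim_treeI[where T = ?T and r = r, OF finite_V _ _ r(1,2)])
    show "?T a = None" if "a \<notin> V" for a
      using that elim_treeD(2)[OF tree] by (auto simp: contract_def V'_def)
    show "b \<in> V" if "?T a = Some b" for a b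
      using that elim_treeD(3)[OF tree] no_loop by (auto simp: contract_def V'_def split: if_splits)
    show "desc ?T r = V" using dz[OF \<open>r \<noteq> v'\<close>] r(3) by simp
    show "conn E' (desc ?T z)" if z: "z \<in> V" for z
    proof (cases "v' \<in> desc T z")
      case True
      have "z \<noteq> v'" using z v'_notin by blast
      then have "v \<in> desc T z - {v'}" using v_below_ancestor_of_v'[OF tree upper True] by simp
      moreover have "desc T z - {v'} \<subseteq> V"
        using elim_tree_desc_subset[OF tree] z by (auto simp: V'_def)
      ultimately have "conn E' (desc T z - {v'})"
        by (intro conn_universal[OF symp_E']) (auto simp: E'_twin_iff)
      then show ?thesis using dz \<open>z \<noteq> v'\<close> by simp
    next
      case False
      have "z \<noteq> v'" using z v'_notin by blast
      then have "desc ?T z = desc T z" using dz False by simp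
      then show ?thesis using elim_treeD(5)[OF tree] z by (simp add: V'_def)
    qed
    show "a \<in> desc ?T b \<or> b \<in> desc ?T a" if ab: "a \<in> V" "b \<in> V" "E' a b" for a b
    proof -
      have "a \<noteq> v'" "b \<noteq> v'" using ab v'_notin by auto
      moreover have "a \<in> desc T b \<or> b \<in> desc T a" using elim_treeD(6)[OF tree _ _ ab(3)] ab
        by (simp add: V'_def)
      ultimately show ?thesis using dz by simp
    qed
  qed
qed

lemma E'_v'_iff_v: "E' u v' \<longleftrightarrow> E' u v"
  by (simp add: E'_twin_iff)

lemma neighbour_in_desc_contract:
  assumes tree: "twin_tree T" and upper: "v' \<notin> desc T v" and z: "z \<noteq> v'"
  shows "(\<exists>y\<in>desc (contract v' T) z. E' u y) \<longleftrightarrow> (\<exists>y\<in>desc T z. E' u y)"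
proof -
  have "desc (contract v' T) z = desc T z - {v'}"
    using desc_contract[of T v' z] parent_neq_self[OF elim_tree_acyclic[OF tree]] z by simp
  moreover have "v \<in> desc T z" if "v' \<in> desc T z" using v_below_ancestor_of_v'[OF tree upper that z] .
  ultimately show ?thesis using E'_v'_iff_v by (metis Diff_iff singletonD v_neq_v')
qed

lemma neighbour_in_desc_v'_iff_contract:
  assumes tree: "twin_tree T" and upper: "v' \<notin> desc T v" and z: "T z = Some v'"
  shows "(\<exists>y\<in>desc T v'. E' u y) \<longleftrightarrow> (\<exists>y\<in>desc (contract v' T) z. E' u y)"
proof -
  have ac: "acyclic (parent_rel T)" using elim_tree_acyclic[OF tree] .
  have "v \<in> desc T v'"
    using twins_sibling_leaves[OF tree _ upper] z by (metis (no_types))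
  then obtain z0 where z0: "T z0 = Some v'" "v \<in> desc T z0" "\<forall>c. T c = Some v' \<longrightarrow> c = z0"
    "desc T v' = insert v' (desc T z0)" using twin_upper_unique_child[OF tree] by blast
  have "z = z0" using z0(3) z by blast
  moreover have "z \<noteq> v'" using parent_neq_self[OF ac] z by metis
  ultimately show ?thesis
    using neighbour_in_desc_contract[OF tree upper] z0(2,4) E'_v'_iff_v by auto
qed

lemma contract_rotate:
  assumes tree: "twin_tree T" and upper: "v' \<notin> desc T v" and wu: "T w = Some u"
    and uv': "u \<noteq> v'" and wv': "w \<noteq> v'"
  shows "contract v' (rotate E' T u w) = rotate E' (contract v' T) u w"
proof
  fix z
  let ?R = "rotate E' T u w" and ?C = "contract v' T"
  have ac: "acyclic (parent_rel T)" using elim_tree_acyclic[OF tree] .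
  have uw: "u \<noteq> w" using parent_neq_self[OF ac] wu by metis
  consider "z = v'" | "z = w" | "z = u" | "z \<noteq> v'" "z \<noteq> w" "z \<noteq> u" "T z = Some v'"
    | "z \<noteq> v'" "z \<noteq> w" "z \<noteq> u" "T z \<noteq> Some v'" by blast
  then show "contract v' ?R z = rotate E' ?C u w z"
  proof cases
    case 2
    have "T u = Some v' \<Longrightarrow> T v' \<noteq> Some w" using no_parent_cycle3[OF ac wu] by metis
    then show ?thesis using 2 uw uv' wv' by (auto simp: contract_def rotate_apply)
  next
    case 4
    have C: "?C z = T v'" using 4(1,4) by (simp add: contract_def)
    have "?R z = Some v'" using 4 wv' by (simp add: rotate_apply)
    then have "contract v' ?R z = ?R v'" using 4(1) by (simp add: contract_def)
    also have "\<dots> = (if T v' = Some w \<and> (\<exists>y\<in>desc T v'. E' u y) then Some u else T v')"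
      using uv' wv' by (simp add: rotate_apply)
    also have "\<dots> = (if T v' = Some w \<and> (\<exists>y\<in>desc ?C z. E' u y) then Some u else T v')"
      using neighbour_in_desc_v'_iff_contract[OF tree upper 4(4), of u] by simp
    also have "\<dots> = rotate E' ?C u w z"
      using 4 C by (auto simp: rotate_apply)
    finally show ?thesis .
  next
    case 5
    have R: "?R z = (if T z = Some w \<and> (\<exists>y\<in>desc T z. E' u y) then Some u else T z)"
      using 5 by (simp add: rotate_apply)
    then have "contract v' ?R z = ?R z" using 5 uv' by (auto simp: contract_def)
    moreover have "?C z = T z" using 5 by (simp add: contract_def)
    ultimately show ?thesis
      using R neighbour_in_desc_contract[OF tree upper 5(1), of u] 5 by (auto simp: rotate_apply)
  qed (use uw uv' wv' in \<open>simp_all add: contract_def rotate_apply\<close>)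
qed

text \<open>Exchanging v and v' first guarantees that v' does not lie below v; then v' is either the
  upper twin or a leaf, and contracting it gives a search tree of G.\<close>

definition untwin :: "('a \<Rightarrow> 'a option) \<Rightarrow> ('a \<Rightarrow> 'a option)" where
  "untwin T = contract v' (if v' \<in> desc T v then relabel swap T else T)"

text \<open>The rotations that do not change the projection move a twin past its parent or child; each
  of them changes the size of the subtree of the upper twin by one, makes the twins comparable or
  incomparable, or exchanges the twins. The parity is shifted by one when v' is the upper twin so
  that the offset changes in the last case as well.\<close>

definition twin_offset :: "('a \<Rightarrow> 'a option) \<Rightarrow> nat" where
  "twin_offset T = (if v \<in> desc T v' then (card (desc T v') + 1) mod 2
     else if v' \<in> desc T v then card (desc T v) mod 2 else 2)"

lemma twin_offset_less_3: "twin_offset T < 3"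
proof -
  have "n mod 2 < 3" for n :: nat using mod_less_divisor[of 2 n] by linarith
  then show ?thesis by (simp add: twin_offset_def)
qed

lemma v_below_swap_iff: "v \<in> desc (relabel swap T) v' \<longleftrightarrow> v' \<in> desc T v"
  and v'_below_swap_iff: "v' \<in> desc (relabel swap T) v \<longleftrightarrow> v \<in> desc T v'"
  by (simp_all add: desc_swap image_iff) (metis swap_swap swap_simps(1,2))+

lemma untwin_upper: "v' \<notin> desc T v \<Longrightarrow> untwin T = contract v' T"
  by (simp add: untwin_def)

lemma untwin_elim_tree: "twin_tree T \<Longrightarrow> elim_tree V E' (untwin T)"
  unfolding untwin_def
  using contract_elim_tree twin_tree_swap v'_below_swap_iff twins_not_both_below by auto

lemma twin_offset_upper: "v \<in> desc T v' \<Longrightarrow> twin_offset T = (card (desc T v') + 1) mod 2"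
  by (simp add: twin_offset_def)

lemma twin_offset_lower: "twin_tree T \<Longrightarrow> v' \<in> desc T v \<Longrightarrow> twin_offset T = card (desc T v) mod 2"
  using twins_not_both_below by (auto simp: twin_offset_def)

lemma twin_offset_incomparable: "v \<notin> desc T v' \<Longrightarrow> v' \<notin> desc T v \<Longrightarrow> twin_offset T = 2"
  by (simp add: twin_offset_def)

lemma relabel_swap_incomparable:
  assumes tree: "twin_tree T" and inc: "v \<notin> desc T v'" "v' \<notin> desc T v"
  shows "relabel swap T = T"
proof
  fix z
  obtain q where q: "T v = Some q" "T v' = Some q" "q \<in> V" "q \<noteq> v"
    and leaves: "\<forall>c. T c \<noteq> Some v" "\<forall>c. T c \<noteq> Some v'"
    using twins_sibling_leaves[OF tree inc] by blast
  have "swap q = q" using q(3,4) v'_notin by (metis swap_simps(3))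
  moreover have "map_option swap (T x) = T x" for x
  proof (cases "T x")
    case (Some a)
    then have "a \<noteq> v" "a \<noteq> v'" using leaves by auto
    then show ?thesis using Some by simp
  qed simp
  ultimately show "relabel swap T z = T z"
    using q by (cases "z = v \<or> z = v'") (auto simp: relabel_def)
qed

lemma untwin_swap: "twin_tree T \<Longrightarrow> untwin (relabel swap T) = untwin T"
  using v'_below_swap_iff v_below_swap_iff twins_not_both_below relabel_swap_incomparable
  by (cases "v' \<in> desc T v"; cases "v \<in> desc T v'") (auto simp: untwin_def)

lemma card_desc_swap: "card (desc (relabel swap T) z) = card (desc T (swap z))"
  unfolding desc_swap by (rule card_image) (metis inj_onI swap_swap)

lemma twin_offset_swap:
  assumes tree: "twin_tree T"
  shows "twin_offset (relabel swap T) = (if twin_offset T = 2 then 2 else 1 - twin_offset T)"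
proof -
  have "v \<notin> desc T v' \<or> v' \<notin> desc T v" using twins_not_both_below[OF tree] by blast
  moreover have "twin_offset (relabel swap T) = twin_offset T" if "v \<notin> desc T v'" "v' \<notin> desc T v"
    using relabel_swap_incomparable[OF tree that] by simp
  ultimately show ?thesis
    using v'_below_swap_iff v_below_swap_iff twins_not_both_below[OF twin_tree_swap[OF tree]]
    by (auto simp: twin_offset_def card_desc_swap) presburger+
qed

context
  fixes T1 T2 :: "'a \<Rightarrow> 'a option" and u w :: 'a
  assumes tree1: "twin_tree T1" and tree2: "twin_tree T2" and wu: "T1 w = Some u"
    and T2: "T2 = rotate E' T1 u w"
begin

lemma u_neq_w: "u \<noteq> w"
  using parent_neq_self[OF elim_tree_acyclic[OF tree1]] wu by metis

lemma rotate_away_from_v'_offset: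
  assumes upper: "v' \<notin> desc T1 v" and uv': "u \<noteq> v'" and wv': "w \<noteq> v'"
    and wv: "v \<in> desc T1 v' \<or> w \<noteq> v"
  shows "twin_offset T2 = twin_offset T1 \<and> v' \<notin> desc T2 v"
proof -
  have dv': "desc T2 v' = desc T1 v'"
    using desc_rotate_other[of T1 w u v' E', OF wu u_neq_w] uv' wv' T2 by auto
  show ?thesis
  proof (cases "v \<in> desc T1 v'")
    case True
    then have "v \<in> desc T2 v'" using dv' by simp
    then show ?thesis
      using twin_offset_upper[OF True] twin_offset_upper dv'
        twins_not_both_below[OF tree2] by simp
  next
    case False
    have "\<forall>c. T1 c \<noteq> Some v" using twins_sibling_leaves[OF tree1 False upper] by metis
    then have "u \<noteq> v" using wu by auto
    moreover have "w \<noteq> v" using wv False by simp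
    ultimately have "desc T2 v = desc T1 v"
      using desc_rotate_other[of T1 w u v E', OF wu u_neq_w] T2 by auto
    then have "v \<notin> desc T2 v'" "v' \<notin> desc T2 v" using dv' False upper by auto
    then show ?thesis using twin_offset_incomparable False upper by simp
  qed
qed

lemma rotate_away_from_v':
  assumes upper: "v' \<notin> desc T1 v" and uv': "u \<noteq> v'" and wv': "w \<noteq> v'"
    and wv: "v \<in> desc T1 v' \<or> w \<noteq> v"
  shows "rot_adj E (untwin T1) (untwin T2) \<and> twin_offset T1 = twin_offset T2"
proof -
  have ac: "acyclic (parent_rel T1)" using elim_tree_acyclic[OF tree1] .
  have offset: "twin_offset T2 = twin_offset T1 \<and> v' \<notin> desc T2 v"
    by (rule rotate_away_from_v'_offset[OF assms])
  have C1w: "contract v' T1 w = Some u" using wu uv' wv' by (simp add: contract_def)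
  have rot: "contract v' T2 = rotate E (contract v' T1) u w"
    using contract_rotate[OF tree1 upper wu uv' wv']
      rotate_E_eq_E'[OF contract_elim_tree[OF tree1 upper] C1w] T2 by simp
  have "contract v' T2 u = Some w" using rot u_neq_w by (simp add: rotate_apply)
  moreover have "contract v' T1 u \<noteq> Some w"
    using no_parent_cycle2[OF ac wu] no_parent_cycle3[OF ac wu] uv'
    by (auto simp: contract_def)
  ultimately have "contract v' T1 \<noteq> contract v' T2" by metis
  then have "rot_adj E (contract v' T1) (contract v' T2)" unfolding rot_adj_def
    using C1w rot by blast
  then show ?thesis using offset upper untwin_upper by simp
qed

lemma rotate_v'_up_subtree:
  assumes below: "v \<in> desc T1 v'" and w: "w = v'"
  shows "v \<in> desc T2 v' \<and> card (desc T2 v') = card (desc T1 v') + 1"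
proof -
  have ac: "acyclic (parent_rel T1)" using elim_tree_acyclic[OF tree1] .
  have wu': "T1 v' = Some u" using wu w by simp
  have only_child: "c = v'" if c: "T1 c = Some u" for c
  proof (cases "c = v \<or> c = v'")
    case True
    then show ?thesis using siblings_desc_disjoint[OF ac c wu'] below desc_self[of v T1] by blast
  next
    case False
    then show ?thesis using twin_tree_child_unique[OF tree1 wu' below _ c] by simp
  qed
  have "desc T2 v' = desc T1 u" using desc_rotate_lower[of T1 w u E', OF wu u_neq_w] w T2 by simp
  also have "\<dots> = insert u (desc T1 v')" using desc_single_child[of T1 v' u] wu' only_child by blast
  finally have d2: "desc T2 v' = insert u (desc T1 v')" .
  moreover have "u \<notin> desc T1 v'" using parent_not_desc[OF ac wu'] .
  ultimately show ?thesis using below elim_tree_finite_desc[OF tree1] by simp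
qed

lemma rotate_v'_up_contract:
  assumes below: "v \<in> desc T1 v'" and w: "w = v'"
  shows "contract v' T2 = contract v' T1"
proof
  fix z
  have ac: "acyclic (parent_rel T1)" using elim_tree_acyclic[OF tree1] .
  obtain z0 where z0: "T1 z0 = Some v'" "v \<in> desc T1 z0" "\<forall>c. T1 c = Some v' \<longrightarrow> c = z0"
    using twin_upper_unique_child[OF tree1 below] by blast
  have wu': "T1 v' = Some u" using wu w by simp
  have uv': "u \<noteq> v'" using u_neq_w w by simp
  have uv: "u \<noteq> v" using twins_not_both_below[OF tree1 below] child_in_desc[of T1 v' u] wu' by metis
  have z0v': "z0 \<noteq> v'" using parent_neq_self[OF ac] z0(1) by metis
  have z0u: "z0 \<noteq> u" using no_parent_cycle2[OF ac z0(1)] wu' by metis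
  have "E' u v" using E'_adj_twins elim_tree_parent_in[OF tree1 wu'] uv uv' by blast
  then have T2z0: "T2 z0 = Some u" using z0(1,2) z0v' z0u w T2 by (simp add: rotate_apply) blast
  have T2u: "T2 u = Some v'" and T2v': "T2 v' = T1 u"
    using u_neq_w w T2 by (simp_all add: rotate_apply)
  have T2o: "T2 z = T1 z" if "z \<noteq> v'" "z \<noteq> u" "z \<noteq> z0" for z
    using rotate_other[of z w u T1 E'] that z0(3) w T2 by auto
  consider "z = v'" | "z = u" | "z = z0" | "z \<noteq> v'" "z \<noteq> u" "z \<noteq> z0" by blast
  then show "contract v' T2 z = contract v' T1 z"
  proof cases
    case 2
    then show ?thesis using T2u T2v' no_parent_cycle2[OF ac wu'] uv' by (simp add: contract_def)
  next
    case 3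
    then show ?thesis using T2z0 z0(1) z0v' wu' uv' by (simp add: contract_def)
  next
    case 4
    then show ?thesis using T2o[OF 4] z0(3) by (auto simp: contract_def)
  qed (simp add: contract_def)
qed

lemma rotate_v'_up:
  assumes below: "v \<in> desc T1 v'" and w: "w = v'"
  shows "untwin T2 = untwin T1 \<and> twin_offset T1 \<noteq> twin_offset T2"
proof -
  have below2: "v \<in> desc T2 v'" and card: "card (desc T2 v') = card (desc T1 v') + 1"
    using rotate_v'_up_subtree[OF assms] by simp_all
  then have "twin_offset T1 \<noteq> twin_offset T2"
    using twin_offset_upper[OF below] twin_offset_upper[OF below2] by presburger
  then show ?thesis
    using rotate_v'_up_contract[OF assms] untwin_upper twins_not_both_below[OF tree1 below]
      twins_not_both_below[OF tree2 below2] by auto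
qed

lemma v'_only_child:
  assumes below: "v \<in> desc T1 v'" and u: "u = v'"
  shows "T1 c = Some v' \<Longrightarrow> c = w"
  using twin_upper_unique_child[OF tree1 below] wu u by metis

lemma rotate_v'_down_contract:
  assumes below: "v \<in> desc T1 v'" and u: "u = v'"
  shows "contract v' T2 = contract v' T1"
proof
  fix z
  have ac: "acyclic (parent_rel T1)" using elim_tree_acyclic[OF tree1] .
  have wv': "w \<noteq> v'" using u_neq_w u by simp
  have no_loop: "T1 v' \<noteq> Some v'" using parent_neq_self[OF ac] .
  consider "z = v'" | "z = w" | "z \<noteq> v'" "z \<noteq> w" "T1 z = Some w" | "z \<noteq> v'" "z \<noteq> w" "T1 z \<noteq> Some w"
    by blast
  then show "contract v' T2 z = contract v' T1 z"
  proof cases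
    case 2
    then show ?thesis using wu u no_loop T2 by (simp add: contract_def rotate_apply)
  next
    case 3
    then show ?thesis using wv' u T2 by (auto simp: contract_def rotate_apply)
  next
    case 4
    then have "T1 z \<noteq> Some v'" using v'_only_child[OF below u] by blast
    then show ?thesis using 4 u rotate_other[of z w u T1 E'] T2 by (simp add: contract_def)
  qed (simp add: contract_def)
qed

lemma rotate_v'_down_onto_v:
  assumes below: "v \<in> desc T1 v'" and u: "u = v'" and w: "w = v"
  shows "relabel swap T2 = T1"
proof
  fix z
  have ac: "acyclic (parent_rel T1)" using elim_tree_acyclic[OF tree1] .
  have "T1 v' \<noteq> Some v" "T1 v' \<noteq> Some v'"
    using no_parent_cycle2[OF ac wu] parent_neq_self[OF ac] u w by auto
  then have at_v': "map_option swap (T1 v') = T1 v'" by (cases "T1 v'") auto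
  have at_other: "map_option swap (T2 z) = T1 z" if z: "z \<noteq> v" "z \<noteq> v'"
  proof (cases "T1 z = Some v")
    case True
    then have "E' v' z" using E'_adj_twins elim_tree_parent_in[OF tree1 True] z by blast
    then have "T2 z = Some v'" using True z u w T2 by (auto simp: rotate_apply)
    then show ?thesis using True by simp
  next
    case False
    moreover have "T1 z \<noteq> Some v'" using v'_only_child[OF below u] z w by blast
    ultimately show ?thesis using z u w rotate_other[of z w u T1 E'] T2 by (cases "T1 z") auto
  qed
  show "relabel swap T2 z = T1 z"
    using at_v' at_other wu u w T2 by (cases "z = v \<or> z = v'") (auto simp: relabel_def rotate_apply)
qed

lemma v'_grandchild:
  assumes below: "v \<in> desc T1 v'" and u: "u = v'" and wv: "w \<noteq> v"
  shows "\<exists>d. T1 d = Some w \<and> v \<in> desc T1 d \<and> (\<forall>c. T1 c = Some w \<longrightarrow> c = d)"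
proof -
  have ac: "acyclic (parent_rel T1)" using elim_tree_acyclic[OF tree1] .
  have "v \<in> desc T1 w" using twin_upper_unique_child[OF tree1 below] wu u by metis
  then obtain d where d: "T1 d = Some w" "v \<in> desc T1 d" using wv desc_childE by metis
  have "c = d" if c: "T1 c = Some w" for c
  proof -
    have "c \<noteq> v'" using no_parent_cycle2[OF ac wu] c u by auto
    moreover have "c \<noteq> v \<or> c = d"
      using siblings_desc_disjoint[OF ac c d(1)] d(2) desc_self[of c T1]
      by blast
    ultimately show ?thesis using twin_tree_child_unique[OF tree1 d _ c] by blast
  qed
  then show ?thesis using d by blast
qed

lemma rotate_v'_down_keeps_below:
  assumes below: "v \<in> desc T1 v'" and u: "u = v'"
    and d: "T1 d = Some w" "v \<in> desc T1 d" "\<forall>c. T1 c = Some w \<longrightarrow> c = d"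
    and moved: "\<exists>y\<in>desc T1 d. E' v' y"
  shows "v \<in> desc T2 v' \<and> card (desc T2 v') + 1 = card (desc T1 v')"
proof -
  have ac: "acyclic (parent_rel T1)" using elim_tree_acyclic[OF tree1] .
  have dw: "d \<noteq> w" using parent_neq_self[OF ac] d(1) by metis
  have dv': "d \<noteq> v'" using no_parent_cycle2[OF ac wu] d(1) u by auto
  have T2d: "T2 d = Some v'" using d(1) dw dv' moved u T2 by (simp add: rotate_apply)
  have only_d: "c = d" if c: "T2 c = Some v'" for c
  proof -
    have "T1 v' \<noteq> Some v'" "w \<noteq> v'"
      using parent_neq_self[OF ac] u_neq_w u by auto
    then have "c \<noteq> w" "c \<noteq> v'" using c u T2 by (auto simp: rotate_apply)
    moreover have "T2 c = T1 c" if "T1 c \<noteq> Some w" using rotate_other[OF \<open>c \<noteq> w\<close>] that u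
      \<open>c \<noteq> v'\<close> T2 by simp
    ultimately show "c = d" using c d(3) v'_only_child[OF below u] by metis
  qed
  have "desc T2 d = desc T1 d"
    using desc_rotate_other[of T1 w u d E', OF wu u_neq_w] dw dv' u T2 by simp
  moreover have "desc T2 v' = insert v' (desc T2 d)"
    using desc_single_child[of T2 d v'] T2d only_d by blast
  ultimately have d2: "desc T2 v' = insert v' (desc T1 d)" by simp
  have "desc T1 v' = insert v' (desc T1 w)"
    using desc_single_child[of T1 w v'] wu u v'_only_child[OF below u] by blast
  moreover have "desc T1 w = insert w (desc T1 d)"
    using desc_single_child[of T1 d w] d by blast
  moreover have "w \<notin> desc T1 d" "v' \<notin> desc T1 d"
    using parent_not_desc[OF ac d(1)] parent_not_desc[OF ac wu]
      desc_mono[OF child_in_desc[of T1 d w]]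
      d(1) u by auto
  moreover have "finite (desc T1 d)"
    using elim_tree_finite_desc[OF tree1] elim_tree_parent_in[OF tree1 d(1)] by blast
  ultimately show ?thesis using d2 d(2) u_neq_w u by simp
qed

lemma rotate_v'_down_separates:
  assumes below: "v \<in> desc T1 v'" and u: "u = v'"
    and d: "T1 d = Some w" "v \<in> desc T1 d" "\<forall>c. T1 c = Some w \<longrightarrow> c = d"
    and not_moved: "\<not> (\<exists>y\<in>desc T1 d. E' v' y)"
  shows "v \<notin> desc T2 v' \<and> v' \<notin> desc T2 v"
proof -
  have ac: "acyclic (parent_rel T1)" using elim_tree_acyclic[OF tree1] .
  have w_parent: "T1 w = Some v'" using wu u by simp
  have v'd: "v' \<notin> desc T1 d"
    using parent_not_desc[OF ac w_parent] desc_mono[OF child_in_desc[of T1 d w]] d(1) by auto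
  have dv': "d \<noteq> v'" using v'd by auto
  have dv: "d = v"
    using E'_adj_twins[of d] elim_tree_parent_in[OF tree1 d(1)] dv' not_moved desc_self[of d T1]
    by blast
  have leaf1: "T1 x \<noteq> Some v" for x
  proof
    assume x: "T1 x = Some v"
    then have "x \<in> desc T1 d" using child_in_desc dv by metis
    moreover have "x \<noteq> v" using parent_neq_self[OF ac] x by metis
    ultimately show False using E'_adj_twins elim_tree_parent_in[OF tree1 x] v'd not_moved by blast
  qed
  have wv: "w \<noteq> v" using parent_neq_self[OF ac] d(1) dv by metis
  have T2v: "T2 v = Some w" using d(1) dv wv not_moved u T2 by (simp add: rotate_apply)
  have T2o: "T2 c = T1 c" if "c \<noteq> w" "c \<noteq> v'" "c \<noteq> v" for c
    using rotate_other[of c w u T1 E'] that d(3) dv u T2 by auto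
  have T1v': "T1 v' \<noteq> Some v'" "T1 v' \<noteq> Some v"
    using parent_neq_self[OF ac] no_parent_cycle3[OF ac d(1)[unfolded dv] w_parent] by auto
  have T2wv': "T2 w = T1 v'" "T2 v' = Some w" using u_neq_w u T2 by (simp_all add: rotate_apply)
  have no_child: "T2 c \<noteq> Some x" if "x = v \<or> x = v'" for c x
  proof (cases "c = w \<or> c = v' \<or> c = v")
    case True
    then show ?thesis using that T1v' T2wv' T2v wv u_neq_w u by auto
  next
    case False
    then have "T2 c = T1 c" using T2o by blast
    moreover have "T1 c \<noteq> Some v'" using v'_only_child[OF below u] False by blast
    ultimately show ?thesis using leaf1 that by auto
  qed
  then have "desc T2 v' = {v'}" "desc T2 v = {v}" by (simp_all add: desc_leaf)
  then show ?thesis by simp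
qed

lemma rotate_v'_down:
  assumes below: "v \<in> desc T1 v'" and u: "u = v'"
  shows "untwin T2 = untwin T1 \<and> twin_offset T1 \<noteq> twin_offset T2"
proof (cases "w = v")
  case True
  have swapped: "relabel swap T2 = T1" by (rule rotate_v'_down_onto_v[OF below u True])
  then have "v' \<in> desc T2 v" using below v_below_swap_iff by metis
  then have "twin_offset T2 < 2" using twin_offset_lower[OF tree2] by simp
  moreover have "twin_offset T1 = (if twin_offset T2 = 2 then 2 else 1 - twin_offset T2)"
    using twin_offset_swap[OF tree2] swapped by simp
  ultimately have "twin_offset T1 \<noteq> twin_offset T2" by presburger
  then show ?thesis using untwin_swap[OF tree2] swapped by auto
next
  case False
  obtain d where d: "T1 d = Some w" "v \<in> desc T1 d" "\<forall>c. T1 c = Some w \<longrightarrow> c = d"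
    using v'_grandchild[OF below u False] by blast
  have "(v \<in> desc T2 v' \<and> card (desc T2 v') + 1 = card (desc T1 v'))
      \<or> (v \<notin> desc T2 v' \<and> v' \<notin> desc T2 v)"
    using rotate_v'_down_keeps_below[OF below u d] rotate_v'_down_separates[OF below u d] by blast
  then have "twin_offset T1 \<noteq> twin_offset T2 \<and> v' \<notin> desc T2 v"
    using twin_offset_upper[OF below] twin_offset_upper twin_offset_incomparable
      twins_not_both_below[OF tree2]
    by (elim disjE) (presburger, simp)
  then show ?thesis
    using rotate_v'_down_contract[OF below u] twins_not_both_below[OF tree1 below] untwin_upper
    by simp
qed

lemma rotate_v'_over_sibling:
  assumes inc: "v \<notin> desc T1 v'" "v' \<notin> desc T1 v" and w: "w = v'"
  shows "untwin T2 = untwin T1 \<and> twin_offset T1 \<noteq> twin_offset T2"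
proof -
  obtain q where q: "T1 v = Some q" "T1 v' = Some q" "q \<in> V" "q \<noteq> v"
    and leaves: "\<forall>c. T1 c \<noteq> Some v" "\<forall>c. T1 c \<noteq> Some v'"
    using twins_sibling_leaves[OF tree1 inc] by blast
  have u: "u = q" and qv': "q \<noteq> v'" using wu w q(2,3) v'_notin by auto
  have T2q: "T2 q = Some v'" and T2v': "T2 v' = T1 q"
    using T2 u w qv' by (simp_all add: rotate_apply)
  have T2o: "T2 z = T1 z" if "z \<noteq> v'" "z \<noteq> q" for z
    using rotate_other[of z w u T1 E'] that leaves w u T2 by auto
  have "v \<in> desc T2 v'"
    using T2o[of v] q(1,4) T2q desc_trans child_in_desc by (metis v_neq_v')
  then have "twin_offset T2 < 2" "v' \<notin> desc T2 v"
    using twin_offset_upper twins_not_both_below[OF tree2] by simp_all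
  moreover have "contract v' T2 z = contract v' T1 z" for z
    using T2q T2v' T2o[of z] leaves qv' by (cases "z = v' \<or> z = q") (auto simp: contract_def)
  ultimately show ?thesis
    using twin_offset_incomparable[OF inc] untwin_upper[OF inc(2)] untwin_upper by fastforce
qed

end

lemma rotate_untwin_upper:
  assumes tree1: "twin_tree T1" and tree2: "twin_tree T2" and wu: "T1 w = Some u"
    and T2: "T2 = rotate E' T1 u w" and upper: "v' \<notin> desc T1 v"
  shows "(untwin T2 = untwin T1 \<and> twin_offset T1 \<noteq> twin_offset T2)
    \<or> (rot_adj E (untwin T1) (untwin T2) \<and> twin_offset T1 = twin_offset T2)"
proof (cases "v \<in> desc T1 v'")
  case below: True
  then show ?thesis
    using rotate_v'_down[OF tree1 tree2 wu T2 below] rotate_v'_up[OF tree1 tree2 wu T2 below]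
      rotate_away_from_v'[OF tree1 tree2 wu T2 upper] by blast
next
  case inc: False
  obtain q where "\<forall>c. T1 c \<noteq> Some v" "\<forall>c. T1 c \<noteq> Some v'"
    using twins_sibling_leaves[OF tree1 inc upper] by metis
  then have uv': "u \<noteq> v'" and uv: "u \<noteq> v" using wu by auto
  consider "w = v'" | "w = v" | "w \<noteq> v'" "w \<noteq> v" by blast
  then show ?thesis
  proof cases
    case 1
    then show ?thesis using rotate_v'_over_sibling[OF tree1 tree2 wu T2 inc upper] by blast
  next
    case 2
    have swap_T1: "relabel swap T1 = T1" using relabel_swap_incomparable[OF tree1 inc upper] .
    have "relabel swap T2 = rotate E' T1 u v'"
      using relabel_rotate[of swap E' T1 u w] E'_swap swap_T1 uv uv' 2 T2 by simp
    moreover have "T1 v' = Some u"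
      using wu 2 swap_T1 by (metis relabel_def option.simps(9) swap_simps(2,3) uv uv')
    ultimately have
      "untwin (relabel swap T2) = untwin T1 \<and> twin_offset T1 \<noteq> twin_offset (relabel swap T2)"
      using rotate_v'_over_sibling[OF tree1 twin_tree_swap[OF tree2], of v' u] inc upper by blast
    then show ?thesis
      using untwin_swap[OF tree2] twin_offset_swap[OF tree2] twin_offset_incomparable[OF inc upper]
      by (auto split: if_splits)
  next
    case 3
    then show ?thesis using rotate_away_from_v'[OF tree1 tree2 wu T2 upper uv'] by blast
  qed
qed

lemma rotate_untwin:
  assumes tree1: "twin_tree T1" and tree2: "twin_tree T2" and wu: "T1 w = Some u"
    and T2: "T2 = rotate E' T1 u w"
  shows "(untwin T2 = untwin T1 \<and> twin_offset T1 \<noteq> twin_offset T2)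
    \<or> (rot_adj E (untwin T1) (untwin T2) \<and> twin_offset T1 = twin_offset T2)"
proof (cases "v' \<in> desc T1 v")
  case False
  then show ?thesis by (rule rotate_untwin_upper[OF assms])
next
  case True
  let ?S1 = "relabel swap T1" and ?S2 = "relabel swap T2"
  have "?S1 (swap w) = Some (swap u)" using wu by (simp add: relabel_def)
  moreover have "?S2 = rotate E' ?S1 (swap u) (swap w)"
    using relabel_rotate[of swap E'] E'_swap T2 by simp
  moreover have "v' \<notin> desc ?S1 v"
    using True twins_not_both_below[OF tree1] v'_below_swap_iff by metis
  ultimately have "(untwin ?S2 = untwin ?S1 \<and> twin_offset ?S1 \<noteq> twin_offset ?S2)
    \<or> (rot_adj E (untwin ?S1) (untwin ?S2) \<and> twin_offset ?S1 = twin_offset ?S2)"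
    using rotate_untwin_upper twin_tree_swap tree1 tree2 by blast
  moreover have "twin_offset ?S1 = twin_offset ?S2 \<longleftrightarrow> twin_offset T1 = twin_offset T2"
    using twin_offset_swap[OF tree1] twin_offset_swap[OF tree2] twin_offset_less_3[of T1]
      twin_offset_less_3[of T2] by auto
  ultimately show ?thesis using untwin_swap[OF tree1] untwin_swap[OF tree2] by simp
qed

lemma colourable_twin:
  assumes "colourable (rot_vertices V E) (rot_adj E) k" and "3 \<le> k"
  shows "colourable (rot_vertices V' E') (rot_adj E') k"
proof (rule colourable_offset[OF assms(1)])
  show "untwin T \<in> rot_vertices V E" if "T \<in> rot_vertices V' E'" for T
    using that untwin_elim_tree by (simp add: rot_vertices_def search_tree_V_iff search_tree_V'_iff)
  show "twin_offset T < k" for T using twin_offset_less_3[of T] assms(2) by linarith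
  show "(untwin T1 = untwin T2 \<and> twin_offset T1 \<noteq> twin_offset T2)
      \<or> (rot_adj E (untwin T1) (untwin T2) \<and> twin_offset T1 = twin_offset T2)"
    if "T1 \<in> rot_vertices V' E'" "T2 \<in> rot_vertices V' E'" "rot_adj E' T1 T2" for T1 T2
  proof -
    have trees: "twin_tree T1" "twin_tree T2"
      using that(1,2) by (simp_all add: rot_vertices_def search_tree_V'_iff)
    show ?thesis
      using that(3) rotate_untwin[OF trees(1,2)] rotate_untwin[OF trees(2,1)] rot_adj_sym
      unfolding rot_adj_def by metis
  qed
qed

theorem chi_rot_twin: "chi_rot V' E' = chi_rot V E"
  unfolding chi_rot_def
proof (rule chromatic_number_eqI)
  fix k
  obtain a b where ab: "a \<in> V" "b \<in> V" "a \<noteq> b" "\<not> E a b" using non_complete by blast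
  show "colourable (rot_vertices V' E') (rot_adj E') k
    \<longleftrightarrow> colourable (rot_vertices V E) (rot_adj E) k"
    using colourable_lift colourable_twin rot_not_colourable[OF simple_graph v_in universal ab]
    by (meson not_le)
qed

end

theorem corollary3p8:
  fixes V :: "'a set" and E :: "'a \<Rightarrow> 'a \<Rightarrow> bool" and v v' :: 'a
  assumes "graph V E"
    and "conn E V"
    and "\<exists>x\<in>V. \<exists>y\<in>V. x \<noteq> y \<and> \<not> E x y"
    and "v \<in> V" and "\<forall>x\<in>V. x \<noteq> v \<longrightarrow> E v x"
    and "v' \<notin> V"
  shows "chi_rot (insert v' V) (add_false_twin E v v') = chi_rot V E"
proof -
  interpret false_twin V E v v'
    using assms(1,3-6) by unfold_locales
  show ?thesis using chi_rot_twin by (simp add: V'_def E'_def)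
qed

end
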